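(* Let $(V,\mathbf{1}^\vee,D,\mathcal{Y},\check S)$ be a braided multiplicative vertex coalgebra over a commutative ring $R$. Then: (1) (translation) $\mathcal{Y}(z)D(w)\equiv(\mathrm{id}\otimes D(w))\mathcal{Y}(zw)$; (2) (colocality) $(\check S(w/z)\otimes\mathrm{id})(\mathrm{id}\otimes\mathcal{Y}(w))\mathcal{Y}(z)\equiv(\mathrm{id}\otimes\mathcal{Y}(z))\mathcal{Y}(w)$.
   Context: A braided multiplicative vertex $R$-coalgebra consists of: an $R$-module $V$ with restricted dual $V^*$; a covacuum $\mathbf{1}^\vee\in V^*$; an $R$-linear translation operator $D(z)\colon V\to V[z^{\pm1}]$ with $D(z)D(w)=D(zw)$; a vertex coproduct $\mathcal{Y}(z)\colon V\to V\otimes V(\!(z^{-1})\!)$; and a braiding operator $\check S(z)\colon V\otimes V\to V\otimes V(\!(z^{-1})\!)$ which is unitary, $\check S(z^{-1})\check S(z)=\mathrm{id}$. Axioms: (covacuum) $(\mathbf{1}^\vee\otimes\mathrm{id})\mathcal{Y}(z)=\mathrm{id}$; $(\mathrm{id}\otimes\mathbf{1}^\vee)\mathcal{Y}(z)a\in V[z^{\pm1}]$ with $(\mathrm{id}\otimes\mathbf{1}^\vee)\mathcal{Y}(1)a=a$ for all $a\in V$; $(\mathbf{1}^\vee\otimes\mathrm{id})\check S(z)=\mathrm{id}\otimes\mathbf{1}^\vee$. (skew symmetry) $\check S(z^{-1})\mathcal{Y}(z)=\mathcal{Y}(z^{-1})D(z)$, the left side being well-defined. (weak coassociativity) $(\mathcal{Y}(z)\otimes\mathrm{id})\mathcal{Y}(w)\equiv(\mathrm{id}\otimes\mathcal{Y}(w))\mathcal{Y}(zw)$.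 (Yang–Baxter) $(\check S(z)\otimes\mathrm{id})(\mathrm{id}\otimes\check S(zw))(\check S(w)\otimes\mathrm{id})\equiv(\mathrm{id}\otimes\check S(w))(\check S(zw)\otimes\mathrm{id})(\mathrm{id}\otimes\check S(z))$ and $(\mathcal{Y}(z)\otimes\mathrm{id})\check S(w)\equiv(\mathrm{id}\otimes\check S(w))(\check S(zw)\otimes\mathrm{id})(\mathrm{id}\otimes\mathcal{Y}(z))$. Here, for operators with values in $V^{\otimes n}$ in formal variables $z,w$, $A\equiv B$ means that after applying any element of $(V^* )^{\otimes n}$ both sides belong to, and are equal in, $V^*[\![z^{-1},w^{-1}]\!][z,w]$ (as functionals of the input). *)

theory Defs
  imports Main "HOL.Modules"
begin

text \<open>An element of the tensor
power V^(tensor n) is represented by a finitely supported formal R-combination of length-n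
lists of vectors (a function 'v list => 'r); two representatives denote the same tensor iff
their difference lies in the R-span of the multilinearity relations (relation ten_eq).\<close>

type_synonym ('r,'v) ten = "'v list \<Rightarrow> 'r"

definition fsupp :: "('a \<Rightarrow> 'b::zero) \<Rightarrow> 'a set" where
  "fsupp f = {x. f x \<noteq> 0}"

definition tzero :: "('r::zero,'v) ten" where
  "tzero = (\<lambda>_. 0)"

definition pure :: "'v list \<Rightarrow> ('r::{zero,one},'v) ten" where
  "pure xs = (\<lambda>ys. if ys = xs then 1 else 0)"

definition tadd :: "('r::plus,'v) ten \<Rightarrow> ('r,'v) ten \<Rightarrow> ('r,'v) ten" where
  "tadd s t = (\<lambda>zs. s zs + t zs)"

definition tsmul :: "'r::times \<Rightarrow> ('r,'v) ten \<Rightarrow> ('r,'v) ten" where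
  "tsmul c t = (\<lambda>zs. c * t zs)"

definition tsum :: "'i set \<Rightarrow> ('i \<Rightarrow> ('r::comm_monoid_add,'v) ten) \<Rightarrow> ('r,'v) ten" where
  "tsum F f = (\<lambda>zs. \<Sum>i\<in>F. f i zs)"

definition ftens :: "nat \<Rightarrow> ('r::zero,'v) ten set" where
  "ftens n = {t. finite (fsupp t) \<and> (\<forall>xs\<in>fsupp t. length xs = n)}"

definition ten_gens :: "('r::comm_ring_1 \<Rightarrow> 'v::ab_group_add \<Rightarrow> 'v) \<Rightarrow> nat \<Rightarrow> ('r,'v) ten set" where
  "ten_gens sc n =
     {(\<lambda>zs. pure (xs @ [x + y] @ ys) zs - pure (xs @ [x] @ ys) zs - pure (xs @ [y] @ ys) zs)
        | xs x y ys. Suc (length xs + length ys) = n}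
   \<union> {(\<lambda>zs. pure (xs @ [sc c x] @ ys) zs - c * pure (xs @ [x] @ ys) zs)
        | xs c x ys. Suc (length xs + length ys) = n}"

definition ten_rel :: "('r::comm_ring_1 \<Rightarrow> 'v::ab_group_add \<Rightarrow> 'v) \<Rightarrow> nat \<Rightarrow> ('r,'v) ten set" where
  "ten_rel sc n = {t. \<exists>G c. finite G \<and> G \<subseteq> ten_gens sc n \<and> t = (\<lambda>zs. \<Sum>g\<in>G. c g * g zs)}"

definition ten_eq :: "('r::comm_ring_1 \<Rightarrow> 'v::ab_group_add \<Rightarrow> 'v) \<Rightarrow> nat \<Rightarrow> ('r,'v) ten \<Rightarrow> ('r,'v) ten \<Rightarrow> bool" where
  "ten_eq sc n s t \<longleftrightarrow> s \<in> ftens n \<and> t \<in> ftens n \<and> (\<lambda>zs. s zs - t zs) \<in> ten_rel sc n"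

definition tprod :: "('r::comm_ring_1,'v) ten \<Rightarrow> ('r,'v) ten \<Rightarrow> ('r,'v) ten" where
  "tprod s t = (\<lambda>zs. \<Sum>p\<in>fsupp s \<times> fsupp t. if fst p @ snd p = zs then s (fst p) * t (snd p) else 0)"

definition lin :: "('v list \<Rightarrow> ('r::comm_ring_1,'w) ten) \<Rightarrow> ('r,'v) ten \<Rightarrow> ('r,'w) ten" where
  "lin F t = (\<lambda>zs. \<Sum>xs\<in>fsupp t. t xs * F xs zs)"

definition at1 :: "nat \<Rightarrow> ('v \<Rightarrow> ('r::comm_ring_1,'v) ten) \<Rightarrow> 'v list \<Rightarrow> ('r,'v) ten" where
  "at1 i g xs = tprod (tprod (pure (take i xs)) (g (xs ! i))) (pure (drop (Suc i) xs))"

definition at2 :: "nat \<Rightarrow> ('v \<Rightarrow> 'v \<Rightarrow> ('r::comm_ring_1,'v) ten) \<Rightarrow> 'v list \<Rightarrow> ('r,'v) ten" where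
  "at2 i h xs = tprod (tprod (pure (take i xs)) (h (xs ! i) (xs ! Suc i))) (pure (drop (Suc (Suc i)) xs))"

text \<open>contractions (phi (tensor) id) and (id (tensor) phi) : V (tensor) V -> V\<close>
definition contrL :: "('r::comm_ring_1 \<Rightarrow> 'v::ab_group_add \<Rightarrow> 'v) \<Rightarrow> ('v \<Rightarrow> 'r) \<Rightarrow> ('r,'v) ten \<Rightarrow> 'v" where
  "contrL sc \<phi> t = (\<Sum>xs\<in>fsupp t. sc (t xs * \<phi> (xs ! 0)) (xs ! 1))"

definition contrR :: "('r::comm_ring_1 \<Rightarrow> 'v::ab_group_add \<Rightarrow> 'v) \<Rightarrow> ('v \<Rightarrow> 'r) \<Rightarrow> ('r,'v) ten \<Rightarrow> 'v" where
  "contrR sc \<phi> t = (\<Sum>xs\<in>fsupp t. sc (t xs * \<phi> (xs ! 1)) (xs ! 0))"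

definition has_tsum :: "('r::comm_ring_1 \<Rightarrow> 'v::ab_group_add \<Rightarrow> 'v) \<Rightarrow> nat \<Rightarrow> (int \<Rightarrow> ('r,'v) ten) \<Rightarrow> ('r,'v) ten \<Rightarrow> bool" where
  "has_tsum sc n f T \<longleftrightarrow> (\<exists>F. finite F \<and> (\<forall>j. j \<notin> F \<longrightarrow> ten_eq sc n (f j) tzero) \<and> ten_eq sc n (tsum F f) T)"

text \<open>elements of (V^* )^(tensor n): finite formal combinations of lists of functionals in Vd\<close>
definition dualten :: "('v \<Rightarrow> 'r::comm_ring_1) set \<Rightarrow> nat \<Rightarrow> (('v \<Rightarrow> 'r) list \<Rightarrow> 'r) set" where
  "dualten Vd n = {\<Phi>. finite (fsupp \<Phi>) \<and> (\<forall>\<phi>s\<in>fsupp \<Phi>. length \<phi>s = n \<and> set \<phi>s \<subseteq> Vd)}"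

definition pair :: "(('v \<Rightarrow> 'r::comm_ring_1) list \<Rightarrow> 'r) \<Rightarrow> ('r,'v) ten \<Rightarrow> 'r" where
  "pair \<Phi> t = (\<Sum>\<phi>s\<in>fsupp \<Phi>. \<Sum>xs\<in>fsupp t. \<Phi> \<phi>s * t xs * prod_list (map2 (\<lambda>\<phi> x. \<phi> x) \<phi>s xs))"

text \<open>f, a family of coefficients (indexed by exponents (m,k) of z,w) of functionals of the input
  t in V^(tensor k), lies in Vd'[[z^-1,w^-1]][z,w], where Vd' = (V^* )^(tensor k) is the
  (restricted) dual of the input space (Vd' = V^* for k = 1)\<close>
definition in_dser :: "('v \<Rightarrow> 'r::comm_ring_1) set \<Rightarrow> nat \<Rightarrow> (('r,'v) ten \<Rightarrow> int \<times> int \<Rightarrow> 'r) \<Rightarrow> bool" where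
  "in_dser Vd k f \<longleftrightarrow>
     (\<forall>mk. \<exists>\<Psi>\<in>dualten Vd k. \<forall>t\<in>ftens k. f t mk = pair \<Psi> t) \<and>
     (\<exists>M K. \<forall>t\<in>ftens k. \<forall>m n. (m > M \<or> n > K) \<longrightarrow> f t (m, n) = 0)"

text \<open>An operator in two formal variables z, w from V^(tensor k) to V^(tensor n) is given by its
  coefficient of z^m w^l, which is written as a (possibly infinite) sum over j :: int of
  tensors, A t (m,l) j.\<close>
definition pcoeff :: "(('v \<Rightarrow> 'r::comm_ring_1) list \<Rightarrow> 'r) \<Rightarrow> (('r,'v) ten \<Rightarrow> int \<times> int \<Rightarrow> int \<Rightarrow> ('r,'v) ten)
     \<Rightarrow> ('r,'v) ten \<Rightarrow> int \<times> int \<Rightarrow> 'r" where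
  "pcoeff \<Phi> A t mk = (\<Sum>j\<in>fsupp (\<lambda>j. pair \<Phi> (A t mk j)). pair \<Phi> (A t mk j))"

definition op_equiv :: "('v \<Rightarrow> 'r::comm_ring_1) set \<Rightarrow> nat \<Rightarrow> nat
     \<Rightarrow> (('r,'v) ten \<Rightarrow> int \<times> int \<Rightarrow> int \<Rightarrow> ('r,'v) ten)
     \<Rightarrow> (('r,'v) ten \<Rightarrow> int \<times> int \<Rightarrow> int \<Rightarrow> ('r,'v) ten) \<Rightarrow> bool" where
  "op_equiv Vd k n A B \<longleftrightarrow>
     (\<forall>\<Phi>\<in>dualten Vd n.
        (\<forall>t\<in>ftens k. \<forall>mk. finite (fsupp (\<lambda>j. pair \<Phi> (A t mk j)))
                        \<and> finite (fsupp (\<lambda>j. pair \<Phi> (B t mk j)))) \<and>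
        in_dser Vd k (pcoeff \<Phi> A) \<and> in_dser Vd k (pcoeff \<Phi> B) \<and>
        (\<forall>t\<in>ftens k. \<forall>mk. pcoeff \<Phi> A t mk = pcoeff \<Phi> B t mk))"

definition single :: "('r::zero,'v) ten \<Rightarrow> int \<Rightarrow> ('r,'v) ten" where
  "single T j = (if j = 0 then T else tzero)"

text \<open>Data: sc the R-module structure on V; Vd the (restricted) dual V^*, an R-submodule of the
  R-linear functionals on V; cov the covacuum; D k the coefficient of z^k in D(z);
  Y n a (a representative of) the coefficient of z^n in Y(z)a in V (tensor) V;
  S n a b the coefficient of z^n in S(z)(a (tensor) b).\<close>

definition Yx where "Yx Y n t = lin (\<lambda>xs. Y n (xs ! 0)) t"
definition Sx where "Sx S n t = lin (at2 0 (S n)) t"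
definition YL where "YL Y n t = lin (at1 0 (Y n)) t"
definition YR where "YR Y n t = lin (at1 1 (Y n)) t"
definition SL where "SL S n t = lin (at2 0 (S n)) t"
definition SR where "SR S n t = lin (at2 1 (S n)) t"
definition DR where "DR D n t = lin (at1 1 (\<lambda>x. pure [D n x])) t"
definition Dx where "Dx D n t = lin (\<lambda>xs. pure [D n (xs ! 0)]) t"

definition bmv_coalgebra ::
  "('r::comm_ring_1 \<Rightarrow> 'v::ab_group_add \<Rightarrow> 'v) \<Rightarrow> ('v \<Rightarrow> 'r) set \<Rightarrow> ('v \<Rightarrow> 'r)
   \<Rightarrow> (int \<Rightarrow> 'v \<Rightarrow> 'v) \<Rightarrow> (int \<Rightarrow> 'v \<Rightarrow> ('r,'v) ten) \<Rightarrow> (int \<Rightarrow> 'v \<Rightarrow> 'v \<Rightarrow> ('r,'v) ten) \<Rightarrow> bool"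
where
  "bmv_coalgebra sc Vd cov D Y S \<longleftrightarrow>
    \<comment> \<open>V is an R-module, Vd an R-submodule of its linear dual\<close>
    module sc \<and>
    (\<forall>\<phi>\<in>Vd. \<forall>x y c. \<phi> (x + y) = \<phi> x + \<phi> y \<and> \<phi> (sc c x) = c * \<phi> x) \<and>
    (\<lambda>_. 0) \<in> Vd \<and> (\<forall>\<phi>\<in>Vd. \<forall>\<psi>\<in>Vd. (\<lambda>x. \<phi> x + \<psi> x) \<in> Vd) \<and>
    (\<forall>\<phi>\<in>Vd. \<forall>c. (\<lambda>x. c * \<phi> x) \<in> Vd) \<and>
    \<comment> \<open>covacuum\<close>
    cov \<in> Vd \<and>
    \<comment> \<open>translation operator D(z) : V -> V[z,z^-1], R-linear, D(z)D(w) = D(zw)\<close>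
    (\<forall>n x y c. D n (x + y) = D n x + D n y \<and> D n (sc c x) = sc c (D n x)) \<and>
    (\<forall>a. finite {n. D n a \<noteq> 0}) \<and>
    (\<forall>m n a. D m (D n a) = (if m = n then D n a else 0)) \<and>
    \<comment> \<open>vertex coproduct Y(z) : V -> (V (x) V)((z^-1)), R-linear\<close>
    (\<forall>n a. Y n a \<in> ftens 2) \<and>
    (\<forall>n a b c. ten_eq sc 2 (Y n (a + b)) (tadd (Y n a) (Y n b)) \<and>
               ten_eq sc 2 (Y n (sc c a)) (tsmul c (Y n a))) \<and>
    (\<forall>a. \<exists>N. \<forall>n>N. ten_eq sc 2 (Y n a) tzero) \<and>
    \<comment> \<open>braiding S(z) : V (x) V -> (V (x) V)((z^-1)), R-bilinear on pure tensors\<close>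
    (\<forall>n a b. S n a b \<in> ftens 2) \<and>
    (\<forall>n a a' b c. ten_eq sc 2 (S n (a + a') b) (tadd (S n a b) (S n a' b)) \<and>
                  ten_eq sc 2 (S n a (b + a')) (tadd (S n a b) (S n a a')) \<and>
                  ten_eq sc 2 (S n (sc c a) b) (tsmul c (S n a b)) \<and>
                  ten_eq sc 2 (S n a (sc c b)) (tsmul c (S n a b))) \<and>
    (\<forall>a b. \<exists>N. \<forall>n>N. ten_eq sc 2 (S n a b) tzero) \<and>
    \<comment> \<open>unitarity S(z^-1) S(z) = id: coefficient of z^p is sum over n of S_(n-p) S_n\<close>
    (\<forall>t\<in>ftens 2. \<forall>p. has_tsum sc 2 (\<lambda>n. Sx S (n - p) (Sx S n t)) (if p = 0 then t else tzero)) \<and>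
    \<comment> \<open>covacuum axioms\<close>
    (\<forall>n a. contrL sc cov (Y n a) = (if n = 0 then a else 0)) \<and>
    (\<forall>a. finite {n. contrR sc cov (Y n a) \<noteq> 0} \<and>
         (\<Sum>n\<in>{n. contrR sc cov (Y n a) \<noteq> 0}. contrR sc cov (Y n a)) = a) \<and>
    (\<forall>n a b. contrL sc cov (S n a b) = (if n = 0 then sc (cov b) a else 0)) \<and>
    \<comment> \<open>skew symmetry S(z^-1) Y(z) = Y(z^-1) D(z), left side well defined;
        coefficient of z^p: sum_j S_j Y_(p+j) a = sum_k Y_(k-p) D_k a\<close>
    (\<forall>a p. has_tsum sc 2 (\<lambda>j. Sx S j (Y (p + j) a))
              (tsum {k. D k a \<noteq> 0} (\<lambda>k. Y (k - p) (D k a)))) \<and>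
    \<comment> \<open>weak coassociativity (Y(z) (x) id) Y(w) == (id (x) Y(w)) Y(zw)\<close>
    op_equiv Vd 1 3
      (\<lambda>t (m, k). single (YL Y m (Yx Y k t)))
      (\<lambda>t (m, k). single (YR Y (k - m) (Yx Y m t))) \<and>
    \<comment> \<open>Yang-Baxter: (S(z)(x)id)(id(x)S(zw))(S(w)(x)id) == (id(x)S(w))(S(zw)(x)id)(id(x)S(z))\<close>
    op_equiv Vd 3 3
      (\<lambda>t (p, q) i. SL S (p - i) (SR S i (SL S (q - i) t)))
      (\<lambda>t (p, q) i. SR S (q - i) (SL S i (SR S (p - i) t))) \<and>
    \<comment> \<open>(Y(z)(x)id) S(w) == (id(x)S(w))(S(zw)(x)id)(id(x)Y(z))\<close>
    op_equiv Vd 2 3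
      (\<lambda>t (m, k). single (YL Y m (Sx S k t)))
      (\<lambda>t (p, q) i. SR S (q - i) (SL S i (YR Y (p - i) t)))"

end

theory Submission
  imports Defs
begin

text \<open>
  Both identities are tested against decomposable dual tensors \<open>\<phi>\<^sub>1 \<otimes> \<dots> \<otimes> \<phi>\<^sub>n\<close>,
  on which every operator becomes a finite sum over the support of a representative.

  Two consequences of the axioms carry the argument. Pairing skew symmetry with
  \<open>1\<^sup>\<or> \<otimes> \<phi>\<close>, the covacuum kills every coefficient of \<open>S\<close> except the flip
  \<open>S\<^sub>0\<close>, so that \<open>\<phi>(D\<^sub>p a) = (\<phi> \<otimes> 1\<^sup>\<or>)(Y\<^sub>p a)\<close>. Pairing weak coassociativity
  with \<open>1\<^sup>\<or>\<close> in the first slot shows that the coefficients of \<open>(\<phi>\<^sub>1 \<otimes> \<phi>\<^sub>2) Y(z)\<close> and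
  \<open>(\<phi>\<^sub>1 \<otimes> \<phi>\<^sub>2) S(z)\<close> are again finite combinations of functionals in \<open>V\<^sup>*\<close>, so
  that the axioms may be applied after them.

  Translation is then weak coassociativity paired with \<open>1\<^sup>\<or>\<close> in the last slot. For
  colocality, weak coassociativity moves \<open>Y(w)\<close> into the first slot, skew symmetry replaces
  \<open>S(w/z) Y(w)\<close> by \<open>Y(z/w) D(w)\<close>, the identity above turns \<open>D\<close> into \<open>Y\<close> with
  \<open>1\<^sup>\<or>\<close> in the middle slot, and weak coassociativity together with the covacuum axiom
  contracts the result back to \<open>(id \<otimes> Y(z)) Y(w)\<close>.
\<close>

section \<open>Pairing with decomposable dual tensors\<close>

definition eval_dec :: "('v \<Rightarrow> 'r::comm_ring_1) list \<Rightarrow> 'v list \<Rightarrow> 'r" where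
  "eval_dec \<phi>s xs = prod_list (map2 (\<lambda>\<phi> x. \<phi> x) \<phi>s xs)"

definition pair_dec :: "('v \<Rightarrow> 'r::comm_ring_1) list \<Rightarrow> ('r,'v) ten \<Rightarrow> 'r" where
  "pair_dec \<phi>s t = (\<Sum>xs\<in>fsupp t. t xs * eval_dec \<phi>s xs)"

lemma eval_dec_simps [simp]:
  "eval_dec [] xs = 1" "eval_dec \<phi>s [] = 1" "eval_dec (\<phi> # \<phi>s) (x # xs) = \<phi> x * eval_dec \<phi>s xs"
  by (simp_all add: eval_dec_def)

lemma eval_dec_append:
  "length \<phi>s = length xs \<Longrightarrow> eval_dec (\<phi>s @ \<psi>s) (xs @ ys) = eval_dec \<phi>s xs * eval_dec \<psi>s ys"
  by (simp add: eval_dec_def)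

lemma list_eq_1: "length xs = 1 \<Longrightarrow> xs = [xs ! 0]"
  by (cases xs) auto

lemma list_eq_2: "length xs = 2 \<Longrightarrow> xs = [xs ! 0, xs ! 1]"
  by (cases xs; cases "tl xs") auto

lemma list_eq_3: "length xs = 3 \<Longrightarrow> xs = [xs ! 0, xs ! 1, xs ! 2]"
  by (cases xs; cases "tl xs"; cases "tl (tl xs)") auto

lemma sum_fsupp_superset:
  fixes t :: "'a \<Rightarrow> 'r::comm_ring_1"
  assumes "finite A" "fsupp t \<subseteq> A"
  shows "(\<Sum>x\<in>fsupp t. t x * h x) = (\<Sum>x\<in>A. t x * h x)"
  by (rule sum.mono_neutral_left) (use assms in \<open>auto simp: fsupp_def\<close>)

lemma fsupp_pure [simp]: "fsupp (pure xs :: ('r::zero_neq_one,'v) ten) = {xs}"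
  by (auto simp: fsupp_def pure_def)

lemma lin_pure: "lin F (pure xs) = F xs"
  by (rule ext) (simp add: lin_def, simp add: pure_def)

lemma fsupp_lin_subset: "fsupp (lin F t) \<subseteq> (\<Union>xs\<in>fsupp t. fsupp (F xs))"
  by (auto simp: fsupp_def lin_def intro!: sum.neutral)

lemma finite_fsupp_lin:
  "finite (fsupp t) \<Longrightarrow> (\<And>xs. xs \<in> fsupp t \<Longrightarrow> finite (fsupp (F xs))) \<Longrightarrow> finite (fsupp (lin F t))"
  using fsupp_lin_subset[of F t] by (meson finite_UN_I finite_subset)

lemma sum_fsupp_lin:
  fixes t :: "('r::comm_ring_1,'v) ten" and F :: "'v list \<Rightarrow> ('r,'w) ten"
  assumes "finite (fsupp t)" "\<And>xs. xs \<in> fsupp t \<Longrightarrow> finite (fsupp (F xs))"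
  shows "(\<Sum>ys\<in>fsupp (lin F t). lin F t ys * h ys) =
         (\<Sum>xs\<in>fsupp t. t xs * (\<Sum>ys\<in>fsupp (F xs). F xs ys * h ys))"
proof -
  define U where "U = (\<Union>xs\<in>fsupp t. fsupp (F xs))"
  have U: "finite U" using assms unfolding U_def by auto
  have "(\<Sum>ys\<in>fsupp (lin F t). lin F t ys * h ys) = (\<Sum>ys\<in>U. lin F t ys * h ys)"
    using sum_fsupp_superset[OF U] fsupp_lin_subset[of F t] unfolding U_def by blast
  also have "\<dots> = (\<Sum>xs\<in>fsupp t. \<Sum>ys\<in>U. t xs * (F xs ys * h ys))"
    by (simp add: lin_def sum_distrib_right mult.assoc sum.swap[of _ U])
  also have "\<dots> = (\<Sum>xs\<in>fsupp t. t xs * (\<Sum>ys\<in>fsupp (F xs). F xs ys * h ys))"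
  proof (rule sum.cong[OF refl])
    fix xs assume "xs \<in> fsupp t"
    then have "(\<Sum>ys\<in>fsupp (F xs). F xs ys * h ys) = (\<Sum>ys\<in>U. F xs ys * h ys)"
      using sum_fsupp_superset[OF U] unfolding U_def by blast
    then show "(\<Sum>ys\<in>U. t xs * (F xs ys * h ys)) = t xs * (\<Sum>ys\<in>fsupp (F xs). F xs ys * h ys)"
      by (simp add: sum_distrib_left)
  qed
  finally show ?thesis .
qed

lemma fsupp_tprod_subset: "fsupp (tprod s t) \<subseteq> (\<lambda>(u, v). u @ v) ` (fsupp s \<times> fsupp t)"
proof
  fix zs assume "zs \<in> fsupp (tprod s t)"
  then obtain p where "p \<in> fsupp s \<times> fsupp t" "fst p @ snd p = zs"
    unfolding fsupp_def tprod_def by (smt (verit) mem_Collect_eq sum.neutral)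
  then show "zs \<in> (\<lambda>(u, v). u @ v) ` (fsupp s \<times> fsupp t)" by (auto intro!: image_eqI[of _ _ p])
qed

lemma sum_fsupp_tprod:
  fixes s t :: "('r::comm_ring_1,'v) ten"
  assumes "finite (fsupp s)" "finite (fsupp t)"
  shows "(\<Sum>zs\<in>fsupp (tprod s t). tprod s t zs * h zs) =
         (\<Sum>u\<in>fsupp s. \<Sum>v\<in>fsupp t. s u * t v * h (u @ v))"
proof -
  define U where "U = (\<lambda>(u, v). u @ v) ` (fsupp s \<times> fsupp t)"
  have U: "finite U" using assms unfolding U_def by auto
  let ?term = "\<lambda>p zs. if fst p @ snd p = zs then s (fst p) * t (snd p) * h zs else 0"
  have "(\<Sum>zs\<in>fsupp (tprod s t). tprod s t zs * h zs) = (\<Sum>zs\<in>U. tprod s t zs * h zs)"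
    using sum_fsupp_superset[OF U] fsupp_tprod_subset[of s t] unfolding U_def by blast
  also have "\<dots> = (\<Sum>p\<in>fsupp s \<times> fsupp t. \<Sum>zs\<in>U. ?term p zs)"
    unfolding tprod_def sum_distrib_right by (subst sum.swap) (intro sum.cong refl, auto)
  also have "\<dots> = (\<Sum>p\<in>fsupp s \<times> fsupp t. s (fst p) * t (snd p) * h (fst p @ snd p))"
  proof (rule sum.cong[OF refl])
    fix p assume "p \<in> fsupp s \<times> fsupp t"
    then have "fst p @ snd p \<in> U" unfolding U_def by (auto intro!: image_eqI[of _ _ p])
    then show "(\<Sum>zs\<in>U. ?term p zs) = s (fst p) * t (snd p) * h (fst p @ snd p)"
      using U by (simp add: sum.delta)
  qed
  also have "\<dots> = (\<Sum>u\<in>fsupp s. \<Sum>v\<in>fsupp t. s u * t v * h (u @ v))"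
    unfolding sum.cartesian_product by (simp add: case_prod_beta)
  finally show ?thesis .
qed

lemma ftensD:
  "t \<in> ftens n \<Longrightarrow> finite (fsupp t)" "t \<in> ftens n \<Longrightarrow> xs \<in> fsupp t \<Longrightarrow> length xs = n"
  by (auto simp: ftens_def)

lemma ftens_2_cases:
  assumes "t \<in> ftens 2" "xs \<in> fsupp t"
  obtains x0 x1 where "xs = [x0, x1]"
  using list_eq_2[OF ftensD(2)[OF assms]] by blast

lemma ftens_3_cases:
  assumes "t \<in> ftens 3" "xs \<in> fsupp t"
  obtains x0 x1 x2 where "xs = [x0, x1, x2]"
  using list_eq_3[OF ftensD(2)[OF assms]] by blast

lemma pure_in_ftens_iff [simp]: "(pure xs :: ('r::zero_neq_one,'v) ten) \<in> ftens n \<longleftrightarrow> length xs = n"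
  by (simp add: ftens_def)

lemma ftens_tprod: "s \<in> ftens a \<Longrightarrow> t \<in> ftens b \<Longrightarrow> tprod s t \<in> ftens (a + b)"
  using fsupp_tprod_subset[of s t] finite_subset unfolding ftens_def by fastforce

lemma ftens_lin: "finite (fsupp t) \<Longrightarrow> (\<And>xs. xs \<in> fsupp t \<Longrightarrow> F xs \<in> ftens n) \<Longrightarrow> lin F t \<in> ftens n"
  using fsupp_lin_subset[of F t] finite_fsupp_lin[of t F] unfolding ftens_def by blast

lemma ftens_lin_cong:
  "t \<in> ftens k \<Longrightarrow> (\<And>xs. xs \<in> fsupp t \<Longrightarrow> F xs \<in> ftens n) \<Longrightarrow> lin F t \<in> ftens n"
  by (rule ftens_lin) (auto dest: ftensD)

lemma finite_fsupp_diff: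
  "finite (fsupp s) \<Longrightarrow> finite (fsupp t) \<Longrightarrow> finite (fsupp (\<lambda>zs. s zs - t zs :: 'r::ab_group_add))"
  by (rule finite_subset[of _ "fsupp s \<union> fsupp t"]) (auto simp: fsupp_def)

lemma finite_fsupp_smult: "finite (fsupp t) \<Longrightarrow> finite (fsupp (\<lambda>zs. c * t zs :: 'r::ring))"
  by (rule finite_subset[of _ "fsupp t"]) (auto simp: fsupp_def)

lemma pair_dec_superset: "finite A \<Longrightarrow> fsupp t \<subseteq> A \<Longrightarrow> pair_dec \<phi>s t = (\<Sum>xs\<in>A. t xs * eval_dec \<phi>s xs)"
  unfolding pair_dec_def by (rule sum_fsupp_superset)

lemma pair_dec_pure [simp]: "pair_dec \<phi>s (pure xs) = eval_dec \<phi>s xs"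
  by (simp add: pair_dec_def) (simp add: pure_def)

lemma pair_dec_tzero [simp]: "pair_dec \<phi>s tzero = 0"
  by (simp add: pair_dec_def tzero_def fsupp_def)

lemma pair_dec_diff:
  assumes "finite (fsupp s)" "finite (fsupp t)"
  shows "pair_dec \<phi>s (\<lambda>zs. s zs - t zs) = pair_dec \<phi>s s - pair_dec \<phi>s t"
proof -
  let ?A = "fsupp s \<union> fsupp t"
  have A: "finite ?A" using assms by simp
  have "pair_dec \<phi>s (\<lambda>zs. s zs - t zs) = (\<Sum>xs\<in>?A. (s xs - t xs) * eval_dec \<phi>s xs)"
    by (rule pair_dec_superset[OF A]) (auto simp: fsupp_def)
  also have "\<dots> = pair_dec \<phi>s s - pair_dec \<phi>s t"
    using pair_dec_superset[OF A, of s] pair_dec_superset[OF A, of t]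
    by (simp add: left_diff_distrib sum_subtractf)
  finally show ?thesis .
qed

lemma pair_dec_smult:
  "finite (fsupp t) \<Longrightarrow> pair_dec \<phi>s (\<lambda>zs. c * t zs) = c * pair_dec \<phi>s t"
  by (subst pair_dec_superset[of "fsupp t"]) (auto simp: fsupp_def pair_dec_def sum_distrib_left mult.assoc)

lemma pair_dec_sum:
  assumes "finite G" "\<And>g. g \<in> G \<Longrightarrow> finite (fsupp (f g))"
  shows "pair_dec \<phi>s (\<lambda>zs. \<Sum>g\<in>G. f g zs) = (\<Sum>g\<in>G. pair_dec \<phi>s (f g))"
proof -
  let ?A = "\<Union>g\<in>G. fsupp (f g)"
  have A: "finite ?A" using assms by auto
  have "pair_dec \<phi>s (\<lambda>zs. \<Sum>g\<in>G. f g zs) = (\<Sum>xs\<in>?A. (\<Sum>g\<in>G. f g xs) * eval_dec \<phi>s xs)"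
    by (rule pair_dec_superset[OF A]) (auto simp: fsupp_def intro: ccontr sum.neutral)
  also have "\<dots> = (\<Sum>g\<in>G. \<Sum>xs\<in>?A. f g xs * eval_dec \<phi>s xs)"
    by (simp add: sum_distrib_right sum.swap[of _ ?A])
  also have "\<dots> = (\<Sum>g\<in>G. pair_dec \<phi>s (f g))"
    by (intro sum.cong refl pair_dec_superset[OF A, symmetric]) auto
  finally show ?thesis .
qed

lemma pair_dec_tsum:
  "finite G \<Longrightarrow> (\<And>g. g \<in> G \<Longrightarrow> f g \<in> ftens n) \<Longrightarrow> pair_dec \<phi>s (tsum G f) = (\<Sum>g\<in>G. pair_dec \<phi>s (f g))"
  unfolding tsum_def by (rule pair_dec_sum) (auto dest: ftensD)

lemma pair_dec_lin:
  assumes "finite (fsupp t)" "\<And>xs. xs \<in> fsupp t \<Longrightarrow> finite (fsupp (F xs))"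
  shows "pair_dec \<phi>s (lin F t) = (\<Sum>xs\<in>fsupp t. t xs * pair_dec \<phi>s (F xs))"
  unfolding pair_dec_def by (rule sum_fsupp_lin[OF assms])

lemma pair_dec_lin_cong:
  assumes "t \<in> ftens k" "\<And>xs. xs \<in> fsupp t \<Longrightarrow> F xs \<in> ftens n \<and> pair_dec \<phi>s (F xs) = g xs"
  shows "pair_dec \<phi>s (lin F t) = (\<Sum>xs\<in>fsupp t. t xs * g xs)"
proof -
  have "pair_dec \<phi>s (lin F t) = (\<Sum>xs\<in>fsupp t. t xs * pair_dec \<phi>s (F xs))"
    using assms by (intro pair_dec_lin) (auto dest: ftensD)
  also have "\<dots> = (\<Sum>xs\<in>fsupp t. t xs * g xs)"
    using assms(2) by (intro sum.cong) auto
  finally show ?thesis .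
qed

lemma pair_dec_2:
  assumes T: "T \<in> ftens 2"
  shows "pair_dec [a, b] T = (\<Sum>xs\<in>fsupp T. T xs * (a (xs ! 0) * b (xs ! 1)))"
  unfolding pair_dec_def
proof (rule sum.cong[OF refl])
  fix xs assume "xs \<in> fsupp T"
  then obtain x0 x1 where "xs = [x0, x1]" by (rule ftens_2_cases[OF T])
  then show "T xs * eval_dec [a, b] xs = T xs * (a (xs ! 0) * b (xs ! 1))" by simp
qed

lemma pair_dec_tprod:
  assumes "finite (fsupp s)" "finite (fsupp t)" "\<And>u. u \<in> fsupp s \<Longrightarrow> length u = length \<phi>s"
  shows "pair_dec (\<phi>s @ \<psi>s) (tprod s t) = pair_dec \<phi>s s * pair_dec \<psi>s t"
proof -
  have "pair_dec (\<phi>s @ \<psi>s) (tprod s t) =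
        (\<Sum>u\<in>fsupp s. \<Sum>v\<in>fsupp t. s u * t v * eval_dec (\<phi>s @ \<psi>s) (u @ v))"
    unfolding pair_dec_def by (rule sum_fsupp_tprod[OF assms(1,2)])
  also have "\<dots> = (\<Sum>u\<in>fsupp s. \<Sum>v\<in>fsupp t. (s u * eval_dec \<phi>s u) * (t v * eval_dec \<psi>s v))"
    using assms(3) by (intro sum.cong refl) (simp add: eval_dec_append mult_ac)
  also have "\<dots> = pair_dec \<phi>s s * pair_dec \<psi>s t"
    by (simp add: pair_dec_def sum_product)
  finally show ?thesis .
qed

lemma ftens_sandwich:
  "X \<in> ftens m \<Longrightarrow> n = length us + m + length vs \<Longrightarrow> tprod (tprod (pure us) X) (pure vs) \<in> ftens n"
  by (simp add: ftens_tprod)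

lemma pair_dec_sandwich:
  assumes "X \<in> ftens m" "length \<phi>s = m" "length \<alpha>s = length us"
  shows "pair_dec (\<alpha>s @ \<phi>s @ \<beta>s) (tprod (tprod (pure us) X) (pure vs)) =
         eval_dec \<alpha>s us * pair_dec \<phi>s X * eval_dec \<beta>s vs"
proof -
  have "tprod (pure us) X \<in> ftens (length (\<alpha>s @ \<phi>s))"
    using ftens_tprod[OF _ assms(1), of "pure us"] assms(2,3) by simp
  then have "pair_dec ((\<alpha>s @ \<phi>s) @ \<beta>s) (tprod (tprod (pure us) X) (pure vs)) =
             pair_dec (\<alpha>s @ \<phi>s) (tprod (pure us) X) * eval_dec \<beta>s vs"
    by (subst pair_dec_tprod) (auto dest: ftensD)
  moreover have "pair_dec (\<alpha>s @ \<phi>s) (tprod (pure us) X) = eval_dec \<alpha>s us * pair_dec \<phi>s X"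
    using assms by (subst pair_dec_tprod) (auto dest: ftensD)
  ultimately show ?thesis by simp
qed

lemma pair_dec_slot_left:
  "X \<in> ftens 2 \<Longrightarrow> pair_dec [a, b, c] (tprod (tprod (pure []) X) (pure [x])) = pair_dec [a, b] X * c x"
  using pair_dec_sandwich[of X 2 "[a, b]" "[]" "[]" "[c]" "[x]"] by simp

lemma pair_dec_slot_right:
  "X \<in> ftens 2 \<Longrightarrow> pair_dec [a, b, c] (tprod (tprod (pure [x]) X) (pure [])) = a x * pair_dec [b, c] X"
  using pair_dec_sandwich[of X 2 "[b, c]" "[a]" "[x]" "[]" "[]"] by simp

lemma pair_dec_slot_whole:
  "X \<in> ftens 2 \<Longrightarrow> pair_dec [a, b] (tprod (tprod (pure []) X) (pure [])) = pair_dec [a, b] X"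
  using pair_dec_sandwich[of X 2 "[a, b]" "[]" "[]" "[]" "[]"] by simp

lemma pair_dec_slot_pure:
  "pair_dec [a, b] (tprod (tprod (pure [x]) (pure [y])) (pure [])) = a x * b y"
  using pair_dec_sandwich[of "pure [y]" 1 "[b]" "[a]" "[x]" "[]" "[]"] by simp

section \<open>Compatibility with the tensor relations\<close>

definition linear_functional :: "('r::comm_ring_1 \<Rightarrow> 'v::ab_group_add \<Rightarrow> 'v) \<Rightarrow> ('v \<Rightarrow> 'r) \<Rightarrow> bool" where
  "linear_functional sc \<phi> \<longleftrightarrow> (\<forall>x y c. \<phi> (x + y) = \<phi> x + \<phi> y \<and> \<phi> (sc c x) = c * \<phi> x)"

lemma linear_functional_add: "linear_functional sc \<phi> \<Longrightarrow> \<phi> (x + y) = \<phi> x + \<phi> y"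
  and linear_functional_smult: "linear_functional sc \<phi> \<Longrightarrow> \<phi> (sc c x) = c * \<phi> x"
  by (simp_all add: linear_functional_def)

lemma linear_functional_zero: "linear_functional sc \<phi> \<Longrightarrow> \<phi> 0 = 0"
  using linear_functional_add[of sc \<phi> 0 0] by simp

lemma linear_functional_sum: "linear_functional sc \<phi> \<Longrightarrow> \<phi> (\<Sum>i\<in>I. f i) = (\<Sum>i\<in>I. \<phi> (f i))"
  by (induction I rule: infinite_finite_induct) (auto simp: linear_functional_zero linear_functional_add)

lemma eval_dec_at:
  assumes "length xs < length \<phi>s"
  shows "eval_dec \<phi>s (xs @ v # ys) =
    eval_dec (take (length xs) \<phi>s) xs * (\<phi>s ! length xs) v * eval_dec (drop (Suc (length xs)) \<phi>s) ys"
proof -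
  have "\<phi>s = take (length xs) \<phi>s @ [\<phi>s ! length xs] @ drop (Suc (length xs)) \<phi>s"
    using id_take_nth_drop[OF assms] by simp
  then have "eval_dec \<phi>s (xs @ [v] @ ys) =
      eval_dec (take (length xs) \<phi>s @ [\<phi>s ! length xs] @ drop (Suc (length xs)) \<phi>s) (xs @ [v] @ ys)"
    by simp
  also have "\<dots> =
      eval_dec (take (length xs) \<phi>s) xs * ((\<phi>s ! length xs) v * eval_dec (drop (Suc (length xs)) \<phi>s) ys)"
    using assms by (simp add: eval_dec_append)
  finally show ?thesis by (simp add: mult.assoc)
qed

lemma pair_dec_ten_gens:
  assumes g: "g \<in> ten_gens sc n" and len: "length \<phi>s = n"
    and lin: "\<And>\<phi>. \<phi> \<in> set \<phi>s \<Longrightarrow> linear_functional sc \<phi>"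
  shows "finite (fsupp g) \<and> pair_dec \<phi>s g = 0"
  using g unfolding ten_gens_def
proof (elim UnE CollectE exE conjE)
  fix xs x y ys
  assume g: "g = (\<lambda>zs. pure (xs @ [x + y] @ ys) zs - pure (xs @ [x] @ ys) zs - pure (xs @ [y] @ ys) zs)"
    and n: "Suc (length xs + length ys) = n"
  let ?\<phi> = "\<phi>s ! length xs"
  have \<phi>: "linear_functional sc ?\<phi>" "length xs < length \<phi>s" using lin len n by auto
  have "finite (fsupp g)"
    unfolding g by (intro finite_fsupp_diff) simp_all
  moreover have "pair_dec \<phi>s g = 0"
    unfolding g using \<phi>
    by (simp add: pair_dec_diff finite_fsupp_diff eval_dec_at linear_functional_add)
      (simp add: algebra_simps)
  ultimately show ?thesis ..
next
  fix xs c x ys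
  assume g: "g = (\<lambda>zs. pure (xs @ [sc c x] @ ys) zs - c * pure (xs @ [x] @ ys) zs)"
    and n: "Suc (length xs + length ys) = n"
  let ?\<phi> = "\<phi>s ! length xs"
  have \<phi>: "linear_functional sc ?\<phi>" "length xs < length \<phi>s" using lin len n by auto
  have "finite (fsupp g)"
    unfolding g by (intro finite_fsupp_diff finite_fsupp_smult) simp_all
  moreover have "pair_dec \<phi>s g = 0"
    unfolding g using \<phi>
    by (simp add: pair_dec_diff finite_fsupp_smult pair_dec_smult eval_dec_at linear_functional_smult)
  ultimately show ?thesis ..
qed

lemma pair_dec_ten_eq:
  assumes eq: "ten_eq sc n s t" and len: "length \<phi>s = n"
    and lin: "\<And>\<phi>. \<phi> \<in> set \<phi>s \<Longrightarrow> linear_functional sc \<phi>"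
  shows "pair_dec \<phi>s s = pair_dec \<phi>s t"
proof -
  from eq have fin: "finite (fsupp s)" "finite (fsupp t)"
    by (auto simp: ten_eq_def ftens_def)
  from eq obtain G c where G: "finite G" "G \<subseteq> ten_gens sc n"
    and diff: "(\<lambda>zs. s zs - t zs) = (\<lambda>zs. \<Sum>g\<in>G. c g * g zs)"
    unfolding ten_eq_def ten_rel_def by blast
  have gen: "finite (fsupp g) \<and> pair_dec \<phi>s g = 0" if "g \<in> G" for g
    using pair_dec_ten_gens[OF _ len lin] G(2) that by blast
  have "pair_dec \<phi>s s - pair_dec \<phi>s t = pair_dec \<phi>s (\<lambda>zs. \<Sum>g\<in>G. c g * g zs)"
    using pair_dec_diff[OF fin] diff by simp
  also have "\<dots> = (\<Sum>g\<in>G. c g * pair_dec \<phi>s g)"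
    using gen by (simp add: pair_dec_sum[OF G(1)] pair_dec_smult finite_fsupp_smult)
  also have "\<dots> = 0" using gen by simp
  finally show ?thesis by simp
qed

lemma pair_eq_sum_pair_dec: "pair \<Phi> t = (\<Sum>\<phi>s\<in>fsupp \<Phi>. \<Phi> \<phi>s * pair_dec \<phi>s t)"
  by (simp add: pair_def pair_dec_def eval_dec_def sum_distrib_left mult.assoc)

lemma pair_pure_dual: "pair (pure \<phi>s) t = pair_dec \<phi>s t"
  by (simp add: pair_eq_sum_pair_dec) (simp add: pure_def)

lemma pure_in_dualten: "set \<phi>s \<subseteq> Vd \<Longrightarrow> length \<phi>s = n \<Longrightarrow> pure \<phi>s \<in> dualten Vd n"
  by (simp add: dualten_def)

lemma dualtenD:
  "\<Phi> \<in> dualten Vd n \<Longrightarrow> finite (fsupp \<Phi>)"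
  "\<Phi> \<in> dualten Vd n \<Longrightarrow> \<phi>s \<in> fsupp \<Phi> \<Longrightarrow> length \<phi>s = n"
  "\<Phi> \<in> dualten Vd n \<Longrightarrow> \<phi>s \<in> fsupp \<Phi> \<Longrightarrow> set \<phi>s \<subseteq> Vd"
  by (auto simp: dualten_def)

lemma dualten_1_cases:
  assumes "\<Phi> \<in> dualten Vd 1" "\<phi>s \<in> fsupp \<Phi>"
  obtains \<phi> where "\<phi>s = [\<phi>]" "\<phi> \<in> Vd"
  using list_eq_1[OF dualtenD(2)[OF assms]] dualtenD(3)[OF assms] by (metis insert_subset list.set(2))

lemma dualten_2_cases:
  assumes "\<Phi> \<in> dualten Vd 2" "\<phi>s \<in> fsupp \<Phi>"
  obtains \<phi>1 \<phi>2 where "\<phi>s = [\<phi>1, \<phi>2]" "\<phi>1 \<in> Vd" "\<phi>2 \<in> Vd"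
  using list_eq_2[OF dualtenD(2)[OF assms]] dualtenD(3)[OF assms] by (metis insert_subset list.set(2))

lemma dualten_3_cases:
  assumes "\<Phi> \<in> dualten Vd 3" "\<phi>s \<in> fsupp \<Phi>"
  obtains \<phi>1 \<phi>2 \<phi>3 where "\<phi>s = [\<phi>1, \<phi>2, \<phi>3]" "\<phi>1 \<in> Vd" "\<phi>2 \<in> Vd" "\<phi>3 \<in> Vd"
  using list_eq_3[OF dualtenD(2)[OF assms]] dualtenD(3)[OF assms] by (metis insert_subset list.set(2))

text \<open>\<open>dual_snoc \<Phi> c\<close> is \<open>\<Phi> \<otimes> c\<close>.\<close>

definition dual_snoc :: "(('v \<Rightarrow> 'r::comm_ring_1) list \<Rightarrow> 'r) \<Rightarrow> ('v \<Rightarrow> 'r) \<Rightarrow> ('v \<Rightarrow> 'r) list \<Rightarrow> 'r" where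
  "dual_snoc \<Phi> c = (\<lambda>\<phi>s. if \<phi>s \<noteq> [] \<and> last \<phi>s = c then \<Phi> (butlast \<phi>s) else 0)"

lemma fsupp_dual_snoc: "fsupp (dual_snoc \<Phi> c) = (\<lambda>\<phi>s. \<phi>s @ [c]) ` fsupp \<Phi>"
proof (intro subset_antisym subsetI)
  fix \<psi>s assume "\<psi>s \<in> fsupp (dual_snoc \<Phi> c)"
  then have \<psi>s: "\<psi>s \<noteq> []" "last \<psi>s = c" "\<Phi> (butlast \<psi>s) \<noteq> 0"
    by (auto simp: fsupp_def dual_snoc_def split: if_splits)
  then have "\<psi>s = butlast \<psi>s @ [c]" by (metis append_butlast_last_id)
  with \<psi>s show "\<psi>s \<in> (\<lambda>\<phi>s. \<phi>s @ [c]) ` fsupp \<Phi>" by (auto simp: fsupp_def)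
qed (auto simp: fsupp_def dual_snoc_def)

lemma dual_snoc_in_dualten: "\<Phi> \<in> dualten Vd n \<Longrightarrow> c \<in> Vd \<Longrightarrow> dual_snoc \<Phi> c \<in> dualten Vd (Suc n)"
  by (auto simp: dualten_def fsupp_dual_snoc)

lemma pair_dual_snoc: "pair (dual_snoc \<Phi> c) t = (\<Sum>\<phi>s\<in>fsupp \<Phi>. \<Phi> \<phi>s * pair_dec (\<phi>s @ [c]) t)"
proof -
  have "inj_on (\<lambda>\<phi>s. \<phi>s @ [c]) (fsupp \<Phi>)" by (auto simp: inj_on_def)
  then show ?thesis by (simp add: pair_eq_sum_pair_dec fsupp_dual_snoc sum.reindex) (simp add: dual_snoc_def)
qed

lemma pair_dual_snoc_snoc:
  "pair (dual_snoc (dual_snoc \<Psi> c) d) t = (\<Sum>\<psi>s\<in>fsupp \<Psi>. \<Psi> \<psi>s * pair_dec (\<psi>s @ [c, d]) t)"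
proof -
  have "inj_on (\<lambda>\<phi>s. \<phi>s @ [c]) (fsupp \<Psi>)" by (auto simp: inj_on_def)
  then show ?thesis by (simp add: pair_dual_snoc fsupp_dual_snoc sum.reindex) (simp add: dual_snoc_def)
qed

lemma pair_eq_pair_dual_snoc:
  assumes "\<And>\<phi>s. \<phi>s \<in> fsupp \<Phi> \<Longrightarrow> pair_dec \<phi>s t = pair_dec (\<phi>s @ [c]) t'"
  shows "pair \<Phi> t = pair (dual_snoc \<Phi> c) t'"
  unfolding pair_dual_snoc using assms by (simp add: pair_eq_sum_pair_dec)

lemma pair_dual_snoc_eq_sum:
  assumes \<Psi>: "\<Psi> \<in> dualten Vd n" and t: "t \<in> ftens (Suc n)"
  shows "pair (dual_snoc \<Psi> c) t = (\<Sum>ys\<in>fsupp t. t ys * (pair \<Psi> (pure (take n ys)) * c (ys ! n)))"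
proof -
  have split: "eval_dec (\<psi>s @ [c]) ys = eval_dec \<psi>s (take n ys) * c (ys ! n)"
    if "\<psi>s \<in> fsupp \<Psi>" "ys \<in> fsupp t" for \<psi>s ys
  proof -
    have ys: "ys = take n ys @ [ys ! n]"
      using ftensD(2)[OF t that(2)] by (simp add: take_Suc_conv_app_nth[symmetric])
    have "length \<psi>s = length (take n ys)"
      using ftensD(2)[OF t that(2)] dualtenD(2)[OF \<Psi> that(1)] by simp
    then have "eval_dec (\<psi>s @ [c]) (take n ys @ [ys ! n]) = eval_dec \<psi>s (take n ys) * c (ys ! n)"
      by (simp add: eval_dec_append)
    then show ?thesis using ys by simp
  qed
  have "pair (dual_snoc \<Psi> c) t = (\<Sum>\<psi>s\<in>fsupp \<Psi>. \<Sum>ys\<in>fsupp t. \<Psi> \<psi>s * (t ys * eval_dec (\<psi>s @ [c]) ys))"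
    by (simp add: pair_dual_snoc pair_dec_def sum_distrib_left)
  also have "\<dots> = (\<Sum>ys\<in>fsupp t. \<Sum>\<psi>s\<in>fsupp \<Psi>. t ys * ((\<Psi> \<psi>s * eval_dec \<psi>s (take n ys)) * c (ys ! n)))"
    by (subst sum.swap) (intro sum.cong refl, simp add: split mult_ac)
  also have "\<dots> = (\<Sum>ys\<in>fsupp t. t ys * (pair \<Psi> (pure (take n ys)) * c (ys ! n)))"
    by (simp add: pair_eq_sum_pair_dec sum_distrib_left sum_distrib_right)
  finally show ?thesis .
qed

lemma pair_dual1_pure:
  assumes "\<Psi> \<in> dualten Vd 1"
  shows "pair \<Psi> (pure [y]) = (\<Sum>\<psi>s\<in>fsupp \<Psi>. \<Psi> \<psi>s * (\<psi>s ! 0) y)"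
  unfolding pair_eq_sum_pair_dec pair_dec_pure
  by (intro sum.cong refl, subst list_eq_1[OF dualtenD(2)[OF assms]]) auto

lemma pair_dual_snoc_1:
  assumes \<Psi>: "\<Psi> \<in> dualten Vd 1" and t: "t \<in> ftens 2"
  shows "pair (dual_snoc \<Psi> c) t = (\<Sum>ys\<in>fsupp t. t ys * (pair \<Psi> (pure [ys ! 0]) * c (ys ! 1)))"
proof -
  have "t \<in> ftens (Suc 1)" using t by (simp add: numeral_2_eq_2)
  moreover have "take 1 ys = [ys ! 0]" if "ys \<in> fsupp t" for ys
    by (subst list_eq_2[OF ftensD(2)[OF t that]]) simp
  ultimately show ?thesis
    by (simp add: pair_dual_snoc_eq_sum[OF \<Psi>])
qed

lemma pcoeff_single:
  assumes "\<And>j. A t mk j = single T j"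
  shows "pcoeff \<Phi> A t mk = pair \<Phi> T" "finite (fsupp (\<lambda>j. pair \<Phi> (A t mk j)))"
proof -
  have "pair \<Phi> tzero = 0" by (simp add: pair_eq_sum_pair_dec)
  then have A: "(\<lambda>j. pair \<Phi> (A t mk j)) = (\<lambda>j. if j = 0 then pair \<Phi> T else 0)"
    by (auto simp: assms single_def)
  show "pcoeff \<Phi> A t mk = pair \<Phi> T"
    unfolding pcoeff_def A by (cases "pair \<Phi> T = 0") (auto simp: fsupp_def)
  show "finite (fsupp (\<lambda>j. pair \<Phi> (A t mk j)))"
    unfolding A by (rule finite_subset[of _ "{0}"]) (auto simp: fsupp_def)
qed

lemma pcoeff_single_prod [simp]:
  "pcoeff \<Phi> (\<lambda>t (m, k). single (F t m k)) t (m, k) = pair \<Phi> (F t m k)"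
  by (rule pcoeff_single) simp

lemma finite_fsupp_pair_single [simp]: "finite (fsupp (\<lambda>j. pair \<Phi> (single T j)))"
  using pcoeff_single(2)[of "\<lambda>_ _. single T"] by simp

lemma in_dser_cong:
  "(\<And>t mk. t \<in> ftens k \<Longrightarrow> f t mk = g t mk) \<Longrightarrow> in_dser Vd k f = in_dser Vd k g"
  unfolding in_dser_def by (metis (no_types, lifting))

lemma op_equiv_by_dual_transfer:
  assumes equiv: "op_equiv Vd k n' A' B'"
    and dual: "\<And>\<Phi>. \<Phi> \<in> dualten Vd n \<Longrightarrow> T \<Phi> \<in> dualten Vd n'"
    and finite: "\<And>\<Phi> t mk. \<Phi> \<in> dualten Vd n \<Longrightarrow> t \<in> ftens k \<Longrightarrow>
      finite (fsupp (\<lambda>j. pair \<Phi> (A t mk j))) \<and> finite (fsupp (\<lambda>j. pair \<Phi> (B t mk j)))"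
    and coeffs: "\<And>\<Phi> t mk. \<Phi> \<in> dualten Vd n \<Longrightarrow> t \<in> ftens k \<Longrightarrow>
      pcoeff \<Phi> A t mk = pcoeff (T \<Phi>) A' t mk \<and> pcoeff \<Phi> B t mk = pcoeff (T \<Phi>) B' t mk"
  shows "op_equiv Vd k n A B"
  unfolding op_equiv_def
proof (intro ballI)
  fix \<Phi> assume \<Phi>: "\<Phi> \<in> dualten Vd n"
  have equiv': "in_dser Vd k (pcoeff (T \<Phi>) A')" "in_dser Vd k (pcoeff (T \<Phi>) B')"
    "\<forall>t\<in>ftens k. \<forall>mk. pcoeff (T \<Phi>) A' t mk = pcoeff (T \<Phi>) B' t mk"
    using equiv dual[OF \<Phi>] unfolding op_equiv_def by blast+
  have "in_dser Vd k (pcoeff \<Phi> A)" "in_dser Vd k (pcoeff \<Phi> B)"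
    using in_dser_cong[of k "pcoeff \<Phi> A" "pcoeff (T \<Phi>) A'" Vd]
      in_dser_cong[of k "pcoeff \<Phi> B" "pcoeff (T \<Phi>) B'" Vd] coeffs[OF \<Phi>] equiv'(1,2) by blast+
  then show "(\<forall>t\<in>ftens k. \<forall>mk. finite (fsupp (\<lambda>j. pair \<Phi> (A t mk j))) \<and>
        finite (fsupp (\<lambda>j. pair \<Phi> (B t mk j)))) \<and>
      in_dser Vd k (pcoeff \<Phi> A) \<and> in_dser Vd k (pcoeff \<Phi> B) \<and>
      (\<forall>t\<in>ftens k. \<forall>mk. pcoeff \<Phi> A t mk = pcoeff \<Phi> B t mk)"
    using finite[OF \<Phi>] coeffs[OF \<Phi>] equiv'(3) by simp
qed

lemma pair_family_sum_by_components:
  assumes \<Phi>: "finite (fsupp \<Phi>)"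
    and components: "\<And>\<phi>s. \<phi>s \<in> fsupp \<Phi> \<Longrightarrow> finite (fsupp (\<lambda>j. pair_dec \<phi>s (f j))) \<and>
        (\<Sum>j\<in>fsupp (\<lambda>j. pair_dec \<phi>s (f j)). pair_dec \<phi>s (f j)) = pair_dec \<phi>s X"
  shows "finite (fsupp (\<lambda>j. pair \<Phi> (f j))) \<and> (\<Sum>j\<in>fsupp (\<lambda>j. pair \<Phi> (f j)). pair \<Phi> (f j)) = pair \<Phi> X"
proof -
  define J where "J = (\<Union>\<phi>s\<in>fsupp \<Phi>. fsupp (\<lambda>j. pair_dec \<phi>s (f j)))"
  have J: "finite J" unfolding J_def using \<Phi> components by auto
  have sub: "fsupp (\<lambda>j. pair \<Phi> (f j)) \<subseteq> J"
  proof
    fix j assume "j \<in> fsupp (\<lambda>j. pair \<Phi> (f j))"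
    then have "(\<Sum>\<phi>s\<in>fsupp \<Phi>. \<Phi> \<phi>s * pair_dec \<phi>s (f j)) \<noteq> 0"
      by (simp add: fsupp_def pair_eq_sum_pair_dec)
    then obtain \<phi>s where "\<phi>s \<in> fsupp \<Phi>" "pair_dec \<phi>s (f j) \<noteq> 0"
      by (metis (no_types, lifting) mult_zero_right sum.neutral)
    then show "j \<in> J" unfolding J_def fsupp_def by blast
  qed
  have "(\<Sum>j\<in>fsupp (\<lambda>j. pair \<Phi> (f j)). pair \<Phi> (f j)) = (\<Sum>j\<in>J. pair \<Phi> (f j))"
    by (rule sum.mono_neutral_left[OF J sub]) (auto simp: fsupp_def)
  also have "\<dots> = (\<Sum>\<phi>s\<in>fsupp \<Phi>. \<Phi> \<phi>s * (\<Sum>j\<in>J. pair_dec \<phi>s (f j)))"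
    by (simp add: pair_eq_sum_pair_dec sum_distrib_left sum.swap[of _ J])
  also have "\<dots> = (\<Sum>\<phi>s\<in>fsupp \<Phi>. \<Phi> \<phi>s * pair_dec \<phi>s X)"
  proof (intro sum.cong refl arg_cong2[where f = "(*)"])
    fix \<phi>s assume \<phi>s: "\<phi>s \<in> fsupp \<Phi>"
    have "(\<Sum>j\<in>J. pair_dec \<phi>s (f j)) = (\<Sum>j\<in>fsupp (\<lambda>j. pair_dec \<phi>s (f j)). pair_dec \<phi>s (f j))"
      by (rule sum.mono_neutral_right[OF J]) (use \<phi>s in \<open>auto simp: J_def fsupp_def\<close>)
    then show "(\<Sum>j\<in>J. pair_dec \<phi>s (f j)) = pair_dec \<phi>s X" using components[OF \<phi>s] by simp
  qed
  finally show ?thesis using finite_subset[OF sub J] by (simp add: pair_eq_sum_pair_dec)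
qed

lemma pair_dec_DR:
  assumes T: "T \<in> ftens 2"
  shows "pair_dec [a, b] (DR D n T) = (\<Sum>xs\<in>fsupp T. T xs * (a (xs ! 0) * b (D n (xs ! 1))))"
  unfolding DR_def
proof (rule pair_dec_lin_cong[OF T])
  fix xs assume "xs \<in> fsupp T"
  then obtain x0 x1 where xs: "xs = [x0, x1]" by (rule ftens_2_cases[OF T])
  show "at1 1 (\<lambda>x. pure [D n x]) xs \<in> ftens 2 \<and>
      pair_dec [a, b] (at1 1 (\<lambda>x. pure [D n x]) xs) = a (xs ! 0) * b (D n (xs ! 1))"
    using ftens_sandwich[of "pure [D n x1]" 1 2 "[x0]" "[]"] by (simp add: xs at1_def pair_dec_slot_pure)
qed

locale ftens_valued_ops =
  fixes Y :: "int \<Rightarrow> 'v \<Rightarrow> ('r::comm_ring_1,'v) ten" and S :: "int \<Rightarrow> 'v \<Rightarrow> 'v \<Rightarrow> ('r,'v) ten"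
  assumes Y_ftens: "Y n a \<in> ftens 2" and S_ftens: "S n a b \<in> ftens 2"
begin

lemma ftens_Yx: "finite (fsupp t) \<Longrightarrow> Yx Y m t \<in> ftens 2"
  unfolding Yx_def by (rule ftens_lin) (simp_all add: Y_ftens)

lemma pair_dec_Yx:
  "finite (fsupp t) \<Longrightarrow> pair_dec \<phi>s (Yx Y m t) = (\<Sum>xs\<in>fsupp t. t xs * pair_dec \<phi>s (Y m (xs ! 0)))"
  unfolding Yx_def by (rule pair_dec_lin) (simp_all add: ftensD(1)[OF Y_ftens])

lemma pair_dec_Yx_Dx:
  assumes t: "finite (fsupp t)"
  shows "pair_dec \<phi>s (Yx Y m (Dx D k t)) = (\<Sum>xs\<in>fsupp t. t xs * pair_dec \<phi>s (Y m (D k (xs ! 0))))"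
proof -
  have "finite (fsupp (Dx D k t))"
    unfolding Dx_def by (rule finite_fsupp_lin[OF t]) simp
  then have "pair_dec \<phi>s (Yx Y m (Dx D k t)) =
      (\<Sum>ys\<in>fsupp (Dx D k t). Dx D k t ys * pair_dec \<phi>s (Y m (ys ! 0)))"
    by (rule pair_dec_Yx)
  also have "\<dots> = (\<Sum>xs\<in>fsupp t. t xs *
      (\<Sum>ys\<in>fsupp (pure [D k (xs ! 0)] :: ('r,'v) ten). pure [D k (xs ! 0)] ys * pair_dec \<phi>s (Y m (ys ! 0))))"
    unfolding Dx_def by (rule sum_fsupp_lin[OF t]) simp
  also have "\<dots> = (\<Sum>xs\<in>fsupp t. t xs * pair_dec \<phi>s (Y m (D k (xs ! 0))))"
    by simp (simp add: pure_def)
  finally show ?thesis .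
qed

lemma pair_dec_YL:
  assumes T: "T \<in> ftens 2"
  shows "pair_dec [a, b, c] (YL Y m T) = (\<Sum>xs\<in>fsupp T. T xs * (pair_dec [a, b] (Y m (xs ! 0)) * c (xs ! 1)))"
  unfolding YL_def
proof (rule pair_dec_lin_cong[OF T])
  fix xs assume "xs \<in> fsupp T"
  then obtain x0 x1 where xs: "xs = [x0, x1]" by (rule ftens_2_cases[OF T])
  show "at1 0 (Y m) xs \<in> ftens 3 \<and>
      pair_dec [a, b, c] (at1 0 (Y m) xs) = pair_dec [a, b] (Y m (xs ! 0)) * c (xs ! 1)"
    using ftens_sandwich[of "Y m x0" 2 3 "[]" "[x1]"] by (simp add: xs at1_def Y_ftens pair_dec_slot_left)
qed

lemma YR_summand:
  assumes T: "T \<in> ftens 2" and xs: "xs \<in> fsupp T"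
  shows "at1 1 (Y m) xs \<in> ftens 3 \<and>
    pair_dec [a, b, c] (at1 1 (Y m) xs) = a (xs ! 0) * pair_dec [b, c] (Y m (xs ! 1))"
proof -
  obtain x0 x1 where xs: "xs = [x0, x1]" by (rule ftens_2_cases[OF T xs])
  show ?thesis
    using ftens_sandwich[of "Y m x1" 2 3 "[x0]" "[]"] by (simp add: xs at1_def Y_ftens pair_dec_slot_right)
qed

lemma ftens_YR: "T \<in> ftens 2 \<Longrightarrow> YR Y m T \<in> ftens 3"
  unfolding YR_def by (rule ftens_lin_cong, assumption, rule conjunct1[OF YR_summand])

lemma pair_dec_YR:
  "T \<in> ftens 2 \<Longrightarrow>
    pair_dec [a, b, c] (YR Y m T) = (\<Sum>xs\<in>fsupp T. T xs * (a (xs ! 0) * pair_dec [b, c] (Y m (xs ! 1))))"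
  unfolding YR_def by (rule pair_dec_lin_cong, assumption, rule YR_summand)

lemma Sx_summand:
  assumes T: "T \<in> ftens 2" and xs: "xs \<in> fsupp T"
  shows "at2 0 (S j) xs \<in> ftens 2 \<and>
    pair_dec [a, b] (at2 0 (S j) xs) = pair_dec [a, b] (S j (xs ! 0) (xs ! 1))"
proof -
  obtain x0 x1 where xs: "xs = [x0, x1]" by (rule ftens_2_cases[OF T xs])
  show ?thesis
    using ftens_sandwich[of "S j x0 x1" 2 2 "[]" "[]"] by (simp add: xs at2_def S_ftens pair_dec_slot_whole)
qed

lemma ftens_Sx: "T \<in> ftens 2 \<Longrightarrow> Sx S j T \<in> ftens 2"
  unfolding Sx_def by (rule ftens_lin_cong, assumption, rule conjunct1[OF Sx_summand])

lemma pair_dec_Sx: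
  "T \<in> ftens 2 \<Longrightarrow> pair_dec [a, b] (Sx S j T) = (\<Sum>xs\<in>fsupp T. T xs * pair_dec [a, b] (S j (xs ! 0) (xs ! 1)))"
  unfolding Sx_def by (rule pair_dec_lin_cong, assumption, rule Sx_summand)

lemma pair_dec_Sx_pure: "pair_dec [a, b] (Sx S j (pure [x, y])) = pair_dec [a, b] (S j x y)"
  by (simp add: pair_dec_Sx) (simp add: pure_def)

lemma pair_dec_SL:
  assumes T: "T \<in> ftens 3"
  shows "pair_dec [a, b, c] (SL S j T) =
    (\<Sum>xs\<in>fsupp T. T xs * (pair_dec [a, b] (S j (xs ! 0) (xs ! 1)) * c (xs ! 2)))"
  unfolding SL_def
proof (rule pair_dec_lin_cong[OF T])
  fix xs assume "xs \<in> fsupp T"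
  then obtain x0 x1 x2 where xs: "xs = [x0, x1, x2]" by (rule ftens_3_cases[OF T])
  show "at2 0 (S j) xs \<in> ftens 3 \<and>
      pair_dec [a, b, c] (at2 0 (S j) xs) = pair_dec [a, b] (S j (xs ! 0) (xs ! 1)) * c (xs ! 2)"
    using ftens_sandwich[of "S j x0 x1" 2 3 "[]" "[x2]"] by (simp add: xs at2_def S_ftens pair_dec_slot_left)
qed

lemma pair_dual_snoc_YL:
  assumes \<Psi>: "\<Psi> \<in> dualten Vd 2" and T: "T \<in> ftens 2"
  shows "pair (dual_snoc \<Psi> c) (YL Y m T) = (\<Sum>ys\<in>fsupp T. T ys * (pair \<Psi> (Y m (ys ! 0)) * c (ys ! 1)))"
proof -
  have "pair (dual_snoc \<Psi> c) (YL Y m T) =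
        (\<Sum>\<psi>s\<in>fsupp \<Psi>. \<Sum>ys\<in>fsupp T. \<Psi> \<psi>s * (T ys * (pair_dec \<psi>s (Y m (ys ! 0)) * c (ys ! 1))))"
    unfolding pair_dual_snoc
  proof (rule sum.cong[OF refl])
    fix \<psi>s assume "\<psi>s \<in> fsupp \<Psi>"
    then obtain a b where \<psi>s: "\<psi>s = [a, b]" using dualten_2_cases[OF \<Psi>] by blast
    show "\<Psi> \<psi>s * pair_dec (\<psi>s @ [c]) (YL Y m T) =
        (\<Sum>ys\<in>fsupp T. \<Psi> \<psi>s * (T ys * (pair_dec \<psi>s (Y m (ys ! 0)) * c (ys ! 1))))"
      by (simp add: \<psi>s pair_dec_YL[OF T] sum_distrib_left)
  qed
  also have "\<dots> = (\<Sum>ys\<in>fsupp T. T ys * (pair \<Psi> (Y m (ys ! 0)) * c (ys ! 1)))"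
    by (subst sum.swap) (simp add: pair_eq_sum_pair_dec sum_distrib_left sum_distrib_right mult_ac)
  finally show ?thesis .
qed

lemma pair_Yx:
  "finite (fsupp t) \<Longrightarrow> pair \<Phi> (Yx Y m t) = (\<Sum>xs\<in>fsupp t. t xs * pair \<Phi> (Y m (xs ! 0)))"
  by (simp add: pair_eq_sum_pair_dec pair_dec_Yx sum_distrib_left sum.swap[of _ "fsupp t"] mult.left_commute)

end

section \<open>Consequences of the axioms\<close>

locale braided_mv_coalgebra =
  fixes sc :: "'r::comm_ring_1 \<Rightarrow> 'v::ab_group_add \<Rightarrow> 'v" and Vd :: "('v \<Rightarrow> 'r) set" and cov :: "'v \<Rightarrow> 'r"
    and D :: "int \<Rightarrow> 'v \<Rightarrow> 'v" and Y :: "int \<Rightarrow> 'v \<Rightarrow> ('r,'v) ten"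
    and S :: "int \<Rightarrow> 'v \<Rightarrow> 'v \<Rightarrow> ('r,'v) ten"
  assumes bmv: "bmv_coalgebra sc Vd cov D Y S"

sublocale braided_mv_coalgebra \<subseteq> ftens_valued_ops Y S
  using bmv by unfold_locales (simp_all add: bmv_coalgebra_def)

context braided_mv_coalgebra
begin

lemma Vd_linear: "\<phi> \<in> Vd \<Longrightarrow> linear_functional sc \<phi>"
  and cov_in_Vd: "cov \<in> Vd"
  and covacuum_Y: "contrL sc cov (Y n a) = (if n = 0 then a else 0)"
  and covacuum_S: "contrL sc cov (S n a b) = (if n = 0 then sc (cov b) a else 0)"
  and skew_symmetry: "has_tsum sc 2 (\<lambda>j. Sx S j (Y (p + j) a)) (tsum {k. D k a \<noteq> 0} (\<lambda>k. Y (k - p) (D k a)))"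
  and finite_D_support: "finite {k. D k a \<noteq> 0}"
  and weak_coassociativity: "op_equiv Vd 1 3
      (\<lambda>t (m, k). single (YL Y m (Yx Y k t))) (\<lambda>t (m, k). single (YR Y (k - m) (Yx Y m t)))"
  and Y_braiding: "op_equiv Vd 2 3
      (\<lambda>t (m, k). single (YL Y m (Sx S k t))) (\<lambda>t (p, q) i. SR S (q - i) (SL S i (YR Y (p - i) t)))"
  using bmv unfolding bmv_coalgebra_def linear_functional_def by simp_all

lemma pair_dec_cov_left:
  assumes \<phi>: "\<phi> \<in> Vd" and T: "T \<in> ftens 2"
  shows "pair_dec [cov, \<phi>] T = \<phi> (contrL sc cov T)"
  unfolding pair_dec_2[OF T] contrL_def using Vd_linear[OF \<phi>]
  by (simp add: linear_functional_sum linear_functional_smult mult.assoc)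

lemma pair_dec_cov_Y: "\<phi> \<in> Vd \<Longrightarrow> pair_dec [cov, \<phi>] (Y m y) = (if m = 0 then \<phi> y else 0)"
  using pair_dec_cov_left[OF _ Y_ftens] covacuum_Y linear_functional_zero[OF Vd_linear] by simp

lemma pair_dec_cov_S: "\<phi> \<in> Vd \<Longrightarrow> pair_dec [cov, \<phi>] (S j x y) = (if j = 0 then cov y * \<phi> x else 0)"
  using pair_dec_cov_left[OF _ S_ftens] covacuum_S
    linear_functional_zero[OF Vd_linear] linear_functional_smult[OF Vd_linear] by simp

lemma pair_dec_cov_Sx:
  "\<phi> \<in> Vd \<Longrightarrow> T \<in> ftens 2 \<Longrightarrow> pair_dec [cov, \<phi>] (Sx S j T) = (if j = 0 then pair_dec [\<phi>, cov] T else 0)"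
  by (simp add: pair_dec_Sx pair_dec_cov_S pair_dec_2 mult_ac)

lemma pair_dec_cov_YL_0:
  "\<phi> \<in> Vd \<Longrightarrow> T \<in> ftens 2 \<Longrightarrow> pair_dec [cov, \<phi>, \<psi>] (YL Y 0 T) = pair_dec [\<phi>, \<psi>] T"
  by (simp add: pair_dec_YL pair_dec_cov_Y pair_dec_2)

lemma skew_symmetry_pair_dec:
  assumes \<phi>s: "set \<phi>s \<subseteq> Vd" "length \<phi>s = 2"
  obtains F where "\<And>a. finite (F a)" "\<And>a j. j \<notin> F a \<Longrightarrow> pair_dec \<phi>s (Sx S j (Y (p + j) a)) = 0"
    "\<And>a. (\<Sum>j\<in>F a. pair_dec \<phi>s (Sx S j (Y (p + j) a))) = (\<Sum>k\<in>{k. D k a \<noteq> 0}. pair_dec \<phi>s (Y (k - p) (D k a)))"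
proof -
  have lin: "\<And>\<phi>. \<phi> \<in> set \<phi>s \<Longrightarrow> linear_functional sc \<phi>" using \<phi>s(1) Vd_linear by blast
  have "\<exists>F. finite F \<and> (\<forall>j. j \<notin> F \<longrightarrow> pair_dec \<phi>s (Sx S j (Y (p + j) a)) = 0) \<and>
    (\<Sum>j\<in>F. pair_dec \<phi>s (Sx S j (Y (p + j) a))) = (\<Sum>k\<in>{k. D k a \<noteq> 0}. pair_dec \<phi>s (Y (k - p) (D k a)))"
    for a
  proof -
    obtain F where F: "finite F" "\<And>j. j \<notin> F \<Longrightarrow> ten_eq sc 2 (Sx S j (Y (p + j) a)) tzero"
      "ten_eq sc 2 (tsum F (\<lambda>j. Sx S j (Y (p + j) a))) (tsum {k. D k a \<noteq> 0} (\<lambda>k. Y (k - p) (D k a)))"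
      using skew_symmetry[of p a] unfolding has_tsum_def by blast
    have "pair_dec \<phi>s (Sx S j (Y (p + j) a)) = 0" if "j \<notin> F" for j
      using pair_dec_ten_eq[OF F(2)[OF that] \<phi>s(2) lin] by simp
    moreover have "pair_dec \<phi>s (tsum F (\<lambda>j. Sx S j (Y (p + j) a))) = (\<Sum>j\<in>F. pair_dec \<phi>s (Sx S j (Y (p + j) a)))"
      by (rule pair_dec_tsum[OF F(1)]) (auto intro: ftens_Sx Y_ftens)
    moreover have "pair_dec \<phi>s (tsum {k. D k a \<noteq> 0} (\<lambda>k. Y (k - p) (D k a))) =
        (\<Sum>k\<in>{k. D k a \<noteq> 0}. pair_dec \<phi>s (Y (k - p) (D k a)))"
      by (rule pair_dec_tsum[OF finite_D_support]) (auto intro: Y_ftens)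
    ultimately show ?thesis using F(1) pair_dec_ten_eq[OF F(3) \<phi>s(2) lin] by auto
  qed
  then have "\<exists>F. \<forall>a. finite (F a) \<and> (\<forall>j. j \<notin> F a \<longrightarrow> pair_dec \<phi>s (Sx S j (Y (p + j) a)) = 0) \<and>
    (\<Sum>j\<in>F a. pair_dec \<phi>s (Sx S j (Y (p + j) a))) = (\<Sum>k\<in>{k. D k a \<noteq> 0}. pair_dec \<phi>s (Y (k - p) (D k a)))"
    by (intro choice allI)
  then show thesis using that by blast
qed

lemma functional_D_eq_pair_dec_Y:
  assumes \<phi>: "\<phi> \<in> Vd"
  shows "\<phi> (D p a) = pair_dec [\<phi>, cov] (Y p a)"
proof -
  have "set [cov, \<phi>] \<subseteq> Vd" "length [cov, \<phi>] = 2" using \<phi> cov_in_Vd by simp_all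
  then obtain F where F: "\<And>a. finite (F a)" "\<And>a j. j \<notin> F a \<Longrightarrow> pair_dec [cov, \<phi>] (Sx S j (Y (p + j) a)) = 0"
    "\<And>a. (\<Sum>j\<in>F a. pair_dec [cov, \<phi>] (Sx S j (Y (p + j) a))) =
      (\<Sum>k\<in>{k. D k a \<noteq> 0}. pair_dec [cov, \<phi>] (Y (k - p) (D k a)))"
    by (rule skew_symmetry_pair_dec[where p = p]) blast
  have "(\<Sum>j\<in>F a. pair_dec [cov, \<phi>] (Sx S j (Y (p + j) a))) = pair_dec [\<phi>, cov] (Y p a)"
  proof (cases "0 \<in> F a")
    case True
    then show ?thesis using F(1) by (simp add: pair_dec_cov_Sx[OF \<phi> Y_ftens] sum.delta)
  next
    case False
    then show ?thesis using F(1) F(2)[of 0 a] by (simp add: pair_dec_cov_Sx[OF \<phi> Y_ftens] sum.delta)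
  qed
  moreover have "(\<Sum>k\<in>{k. D k a \<noteq> 0}. pair_dec [cov, \<phi>] (Y (k - p) (D k a))) = \<phi> (D p a)"
    using finite_D_support[of a] linear_functional_zero[OF Vd_linear[OF \<phi>]]
    by (simp add: pair_dec_cov_Y[OF \<phi>] sum.delta)
  ultimately show ?thesis using F(3) by simp
qed

lemma weak_coassociativity_pair_dec:
  assumes "set \<phi>s \<subseteq> Vd" "length \<phi>s = 3" "t \<in> ftens 1"
  shows "pair_dec \<phi>s (YL Y m (Yx Y k t)) = pair_dec \<phi>s (YR Y (k - m) (Yx Y m t))"
proof -
  have "pcoeff (pure \<phi>s) (\<lambda>t (m, k). single (YL Y m (Yx Y k t))) t (m, k) =
        pcoeff (pure \<phi>s) (\<lambda>t (m, k). single (YR Y (k - m) (Yx Y m t))) t (m, k)"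
    using weak_coassociativity pure_in_dualten[OF assms(1,2)] assms(3) unfolding op_equiv_def by blast
  then show ?thesis by (simp add: pair_pure_dual)
qed

lemma weak_coassociativity_cov_left:
  assumes "\<phi>1 \<in> Vd" "\<phi>2 \<in> Vd"
  shows "in_dser Vd 1 (pcoeff (pure [cov, \<phi>1, \<phi>2]) (\<lambda>t (m, k). single (YL Y m (Yx Y k t))))"
    and "pcoeff (pure [cov, \<phi>1, \<phi>2]) (\<lambda>t (m, k). single (YL Y m (Yx Y k t))) (pure [y]) (0, m) =
      pair_dec [\<phi>1, \<phi>2] (Y m y)"
proof -
  have "pure [cov, \<phi>1, \<phi>2] \<in> dualten Vd 3" using assms cov_in_Vd by (simp add: pure_in_dualten)
  then show "in_dser Vd 1 (pcoeff (pure [cov, \<phi>1, \<phi>2]) (\<lambda>t (m, k). single (YL Y m (Yx Y k t))))"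
    using weak_coassociativity unfolding op_equiv_def by blast
  show "pcoeff (pure [cov, \<phi>1, \<phi>2]) (\<lambda>t (m, k). single (YL Y m (Yx Y k t))) (pure [y]) (0, m) =
      pair_dec [\<phi>1, \<phi>2] (Y m y)"
    by (simp add: pair_pure_dual Yx_def lin_pure pair_dec_cov_YL_0[OF assms(1) Y_ftens])
qed

text \<open>The clause of weak coassociativity placing coefficients in \<open>V\<^sup>*\<close>, paired with \<open>1\<^sup>\<or>\<close>
  in the first slot.\<close>

lemma pair_dec_Y_in_dual:
  assumes "\<phi>1 \<in> Vd" "\<phi>2 \<in> Vd"
  obtains \<Psi> where "\<And>m. \<Psi> m \<in> dualten Vd 1" "\<And>m y. pair_dec [\<phi>1, \<phi>2] (Y m y) = pair (\<Psi> m) (pure [y])"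
proof -
  have "\<exists>\<Psi>\<in>dualten Vd 1. \<forall>y. pair_dec [\<phi>1, \<phi>2] (Y m y) = pair \<Psi> (pure [y])" for m
  proof -
    obtain \<Psi> where \<Psi>: "\<Psi> \<in> dualten Vd 1" and eq:
      "\<forall>t\<in>ftens 1. pcoeff (pure [cov, \<phi>1, \<phi>2]) (\<lambda>t (m, k). single (YL Y m (Yx Y k t))) t (0, m) = pair \<Psi> t"
      using weak_coassociativity_cov_left(1)[OF assms] unfolding in_dser_def by blast
    have "pair_dec [\<phi>1, \<phi>2] (Y m y) = pair \<Psi> (pure [y])" for y
      using eq[rule_format, of "pure [y]"] weak_coassociativity_cov_left(2)[OF assms, of y m] by simp
    with \<Psi> show ?thesis by blast
  qed
  then have "\<exists>\<Psi>. \<forall>m. \<Psi> m \<in> dualten Vd 1 \<and> (\<forall>y. pair_dec [\<phi>1, \<phi>2] (Y m y) = pair (\<Psi> m) (pure [y]))"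
    by (intro choice allI) blast
  then show thesis using that by blast
qed

lemma pair_dec_Y_eventually_zero:
  assumes "\<phi>1 \<in> Vd" "\<phi>2 \<in> Vd"
  shows "eventually (\<lambda>p. \<forall>y. pair_dec [\<phi>1, \<phi>2] (Y p y) = 0) at_top"
proof -
  obtain M K where "\<forall>t\<in>ftens 1. \<forall>m n. (m > M \<or> n > K) \<longrightarrow>
      pcoeff (pure [cov, \<phi>1, \<phi>2]) (\<lambda>t (m, k). single (YL Y m (Yx Y k t))) t (m, n) = 0"
    using weak_coassociativity_cov_left(1)[OF assms] unfolding in_dser_def by blast
  then have "\<forall>y. pair_dec [\<phi>1, \<phi>2] (Y p y) = 0" if "p > K" for p
    using that by (simp add: weak_coassociativity_cov_left(2)[OF assms, symmetric])
  then show ?thesis using eventually_gt_at_top[of K] by (rule eventually_mono[rotated])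
qed

lemma pair_dec_Sx_in_dual:
  assumes \<phi>: "\<phi>1 \<in> Vd" "\<phi>2 \<in> Vd"
  obtains \<Psi> where "\<Psi> \<in> dualten Vd 2" "\<And>T. T \<in> ftens 2 \<Longrightarrow> pair_dec [\<phi>1, \<phi>2] (Sx S j T) = pair \<Psi> T"
proof -
  have "pure [cov, \<phi>1, \<phi>2] \<in> dualten Vd 3" using \<phi> cov_in_Vd by (simp add: pure_in_dualten)
  then have "in_dser Vd 2 (pcoeff (pure [cov, \<phi>1, \<phi>2]) (\<lambda>t (m, k). single (YL Y m (Sx S k t))))"
    using Y_braiding unfolding op_equiv_def by blast
  then obtain \<Psi> where "\<Psi> \<in> dualten Vd 2"
    "\<forall>T\<in>ftens 2. pcoeff (pure [cov, \<phi>1, \<phi>2]) (\<lambda>t (m, k). single (YL Y m (Sx S k t))) T (0, j) = pair \<Psi> T"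
    unfolding in_dser_def by blast
  with that show thesis
    by (simp add: pair_pure_dual pair_dec_cov_YL_0[OF \<phi>(1) ftens_Sx])
qed

lemma pair_dual1_pure_D:
  assumes \<Psi>: "\<Psi> \<in> dualten Vd 1"
  shows "pair \<Psi> (pure [D k y]) = pair (dual_snoc \<Psi> cov) (Y k y)"
proof (rule pair_eq_pair_dual_snoc)
  fix \<psi>s assume "\<psi>s \<in> fsupp \<Psi>"
  then obtain \<psi> where "\<psi>s = [\<psi>]" "\<psi> \<in> Vd" by (rule dualten_1_cases[OF \<Psi>])
  then show "pair_dec \<psi>s (pure [D k y]) = pair_dec (\<psi>s @ [cov]) (Y k y)"
    by (simp add: functional_D_eq_pair_dec_Y)
qed

lemma sum_D_support_eq_sum_Y:
  assumes \<Psi>: "\<And>m. \<Psi> m \<in> dualten Vd 1" and K: "finite K" "{k. D k y \<noteq> 0} \<subseteq> K"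
  shows "(\<Sum>k\<in>{k. D k y \<noteq> 0}. pair (\<Psi> (k - p)) (pure [D k y])) =
    (\<Sum>k\<in>K. pair (dual_snoc (\<Psi> (k - p)) cov) (Y k y))"
proof -
  have zero: "pair (\<Psi> m) (pure [0]) = 0" for m
    unfolding pair_dual1_pure[OF \<Psi>]
    by (rule sum.neutral) (auto elim!: dualten_1_cases[OF \<Psi>] simp: linear_functional_zero[OF Vd_linear])
  show ?thesis
    unfolding pair_dual1_pure_D[OF \<Psi>, symmetric] by (rule sum.mono_neutral_left[OF K]) (use zero in auto)
qed

section \<open>Translation\<close>

lemma translation_pair_dec:
  assumes \<phi>: "\<phi>1 \<in> Vd" "\<phi>2 \<in> Vd" and t: "t \<in> ftens 1"
  shows "pair_dec [\<phi>1, \<phi>2] (Yx Y m (Dx D k t)) = pair_dec [\<phi>1, \<phi>2, cov] (YL Y m (Yx Y k t))"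
proof -
  obtain \<Psi> where \<Psi>: "\<And>m. \<Psi> m \<in> dualten Vd 1" "\<And>m y. pair_dec [\<phi>1, \<phi>2] (Y m y) = pair (\<Psi> m) (pure [y])"
    by (rule pair_dec_Y_in_dual[OF \<phi>]) blast
  have fin: "finite (fsupp t)" using t by (rule ftensD)
  have W: "Yx Y k t \<in> ftens 2" using ftens_Yx[OF fin] .
  have "pair_dec [\<phi>1, \<phi>2] (Yx Y m (Dx D k t)) =
      (\<Sum>xs\<in>fsupp t. t xs * pair (dual_snoc (\<Psi> m) cov) (Y k (xs ! 0)))"
    by (simp add: pair_dec_Yx_Dx[OF fin] \<Psi>(2) pair_dual1_pure_D[OF \<Psi>(1)])
  also have "\<dots> = pair (dual_snoc (\<Psi> m) cov) (Yx Y k t)"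
    by (simp add: pair_Yx[OF fin])
  also have "\<dots> = (\<Sum>ys\<in>fsupp (Yx Y k t). Yx Y k t ys * (pair (\<Psi> m) (pure [ys ! 0]) * cov (ys ! 1)))"
    by (rule pair_dual_snoc_1[OF \<Psi>(1) W])
  also have "\<dots> = pair_dec [\<phi>1, \<phi>2, cov] (YL Y m (Yx Y k t))"
    by (simp add: pair_dec_YL[OF W] \<Psi>(2))
  finally show ?thesis .
qed

lemma translation_pair_dec_DR:
  assumes \<phi>: "\<phi>2 \<in> Vd" and t: "t \<in> ftens 1"
  shows "pair_dec [\<phi>1, \<phi>2] (DR D n (Yx Y m t)) = pair_dec [\<phi>1, \<phi>2, cov] (YR Y n (Yx Y m t))"
proof -
  have "Yx Y m t \<in> ftens 2" using ftens_Yx[OF ftensD(1)[OF t]] .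
  then show ?thesis by (simp add: pair_dec_DR pair_dec_YR functional_D_eq_pair_dec_Y[OF \<phi>])
qed

lemma translation_equiv:
  "op_equiv Vd 1 2 (\<lambda>t (m, k). single (Yx Y m (Dx D k t))) (\<lambda>t (m, k). single (DR D (k - m) (Yx Y m t)))"
proof (rule op_equiv_by_dual_transfer[OF weak_coassociativity, where T = "\<lambda>\<Phi>. dual_snoc \<Phi> cov"])
  show "dual_snoc \<Phi> cov \<in> dualten Vd 3" if "\<Phi> \<in> dualten Vd 2" for \<Phi>
    using dual_snoc_in_dualten[OF that cov_in_Vd] by (simp add: numeral_3_eq_3)
next
  fix \<Phi> and t :: "('r,'v) ten" and mk :: "int \<times> int" assume \<Phi>: "\<Phi> \<in> dualten Vd 2" and t: "t \<in> ftens 1"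
  obtain m k where mk: "mk = (m, k)" by fastforce
  have "pair \<Phi> (Yx Y m (Dx D k t)) = pair (dual_snoc \<Phi> cov) (YL Y m (Yx Y k t))"
  proof (rule pair_eq_pair_dual_snoc)
    fix \<phi>s assume "\<phi>s \<in> fsupp \<Phi>"
    then obtain \<phi>1 \<phi>2 where "\<phi>s = [\<phi>1, \<phi>2]" "\<phi>1 \<in> Vd" "\<phi>2 \<in> Vd" by (rule dualten_2_cases[OF \<Phi>])
    then show "pair_dec \<phi>s (Yx Y m (Dx D k t)) = pair_dec (\<phi>s @ [cov]) (YL Y m (Yx Y k t))"
      using translation_pair_dec[OF _ _ t] by simp
  qed
  moreover have "pair \<Phi> (DR D (k - m) (Yx Y m t)) = pair (dual_snoc \<Phi> cov) (YR Y (k - m) (Yx Y m t))"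
  proof (rule pair_eq_pair_dual_snoc)
    fix \<phi>s assume "\<phi>s \<in> fsupp \<Phi>"
    then obtain \<phi>1 \<phi>2 where "\<phi>s = [\<phi>1, \<phi>2]" "\<phi>1 \<in> Vd" "\<phi>2 \<in> Vd" by (rule dualten_2_cases[OF \<Phi>])
    then show "pair_dec \<phi>s (DR D (k - m) (Yx Y m t)) = pair_dec (\<phi>s @ [cov]) (YR Y (k - m) (Yx Y m t))"
      using translation_pair_dec_DR[OF _ t] by simp
  qed
  ultimately show "pcoeff \<Phi> (\<lambda>t (m, k). single (Yx Y m (Dx D k t))) t mk =
        pcoeff (dual_snoc \<Phi> cov) (\<lambda>t (m, k). single (YL Y m (Yx Y k t))) t mk \<and>
      pcoeff \<Phi> (\<lambda>t (m, k). single (DR D (k - m) (Yx Y m t))) t mk =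
        pcoeff (dual_snoc \<Phi> cov) (\<lambda>t (m, k). single (YR Y (k - m) (Yx Y m t))) t mk"
    by (simp add: mk)
qed (simp split: prod.split)

section \<open>Colocality\<close>

lemma colocality_term:
  assumes \<phi>: "\<phi>1 \<in> Vd" "\<phi>2 \<in> Vd" "\<phi>3 \<in> Vd" and t: "t \<in> ftens 1"
  shows "pair_dec [\<phi>1, \<phi>2, \<phi>3] (SL S j (YR Y (q - j) (Yx Y (p + j) t))) =
    (\<Sum>ys\<in>fsupp (Yx Y (p + q) t). Yx Y (p + q) t ys *
      (pair_dec [\<phi>1, \<phi>2] (Sx S j (Y (p + j) (ys ! 0))) * \<phi>3 (ys ! 1)))"
proof -
  obtain \<Psi> where \<Psi>: "\<Psi> \<in> dualten Vd 2" "\<And>T. T \<in> ftens 2 \<Longrightarrow> pair_dec [\<phi>1, \<phi>2] (Sx S j T) = pair \<Psi> T"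
    using pair_dec_Sx_in_dual[OF \<phi>(1,2), where j = j] by blast
  have fin: "finite (fsupp t)" using t by (rule ftensD)
  define W where "W = Yx Y (p + q) t"
  have W: "W \<in> ftens 2" unfolding W_def using ftens_Yx[OF fin] .
  define X where "X = YR Y (q - j) (Yx Y (p + j) t)"
  have X: "X \<in> ftens (Suc 2)" unfolding X_def using ftens_YR[OF ftens_Yx[OF fin]] by simp
  have "pair_dec [\<phi>1, \<phi>2, \<phi>3] (SL S j X) = (\<Sum>xs\<in>fsupp X. X xs * (pair \<Psi> (pure (take 2 xs)) * \<phi>3 (xs ! 2)))"
    unfolding pair_dec_SL[OF X[simplified]]
  proof (rule sum.cong[OF refl])
    fix xs assume "xs \<in> fsupp X"
    then obtain x0 x1 x2 where xs: "xs = [x0, x1, x2]" by (rule ftens_3_cases[OF X[simplified]])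
    have "pair_dec [\<phi>1, \<phi>2] (S j x0 x1) = pair \<Psi> (pure [x0, x1])"
      using pair_dec_Sx_pure[symmetric] \<Psi>(2)[of "pure [x0, x1]"] by simp
    then show "X xs * (pair_dec [\<phi>1, \<phi>2] (S j (xs ! 0) (xs ! 1)) * \<phi>3 (xs ! 2)) =
        X xs * (pair \<Psi> (pure (take 2 xs)) * \<phi>3 (xs ! 2))"
      by (simp add: xs numeral_2_eq_2)
  qed
  also have "\<dots> = pair (dual_snoc \<Psi> \<phi>3) X"
    by (rule pair_dual_snoc_eq_sum[OF \<Psi>(1) X, symmetric])
  also have "\<dots> = pair (dual_snoc \<Psi> \<phi>3) (YL Y (p + j) W)"
    unfolding pair_dual_snoc
  proof (rule sum.cong[OF refl])
    fix \<psi>s assume "\<psi>s \<in> fsupp \<Psi>"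
    then obtain \<psi>1 \<psi>2 where "\<psi>s = [\<psi>1, \<psi>2]" "\<psi>1 \<in> Vd" "\<psi>2 \<in> Vd" by (rule dualten_2_cases[OF \<Psi>(1)])
    then show "\<Psi> \<psi>s * pair_dec (\<psi>s @ [\<phi>3]) X = \<Psi> \<psi>s * pair_dec (\<psi>s @ [\<phi>3]) (YL Y (p + j) W)"
      using weak_coassociativity_pair_dec[of "[\<psi>1, \<psi>2, \<phi>3]" t "p + j" "p + q"] \<phi>(3) t
      by (simp add: X_def W_def)
  qed
  also have "\<dots> = (\<Sum>ys\<in>fsupp W. W ys * (pair \<Psi> (Y (p + j) (ys ! 0)) * \<phi>3 (ys ! 1)))"
    by (rule pair_dual_snoc_YL[OF \<Psi>(1) W])
  finally show ?thesis using \<Psi>(2)[OF Y_ftens] by (simp add: X_def W_def)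
qed

lemma pair_dec_cov_middle:
  assumes \<psi>: "\<psi> \<in> Vd" and \<phi>: "\<phi> \<in> Vd" and t: "t \<in> ftens 1"
  shows "pair_dec [\<psi>, cov, \<phi>] (YL Y k (Yx Y n t)) = (if k = n then pair_dec [\<psi>, \<phi>] (Yx Y k t) else 0)"
proof -
  have W: "Yx Y k t \<in> ftens 2" using ftens_Yx[OF ftensD(1)[OF t]] .
  have "pair_dec [\<psi>, cov, \<phi>] (YL Y k (Yx Y n t)) = pair_dec [\<psi>, cov, \<phi>] (YR Y (n - k) (Yx Y k t))"
    using weak_coassociativity_pair_dec[of "[\<psi>, cov, \<phi>]" t k n] \<psi> \<phi> t cov_in_Vd by simp
  also have "\<dots> = (\<Sum>zs\<in>fsupp (Yx Y k t). Yx Y k t zs * (\<psi> (zs ! 0) * (if n - k = 0 then \<phi> (zs ! 1) else 0)))"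
    unfolding pair_dec_YR[OF W] pair_dec_cov_Y[OF \<phi>] ..
  also have "\<dots> = (if k = n then pair_dec [\<psi>, \<phi>] (Yx Y k t) else 0)"
    using pair_dec_2[OF W, of \<psi> \<phi>] by auto
  finally show ?thesis .
qed

lemma pair_cov_middle:
  assumes \<Psi>: "\<Psi> \<in> dualten Vd 1" and \<phi>: "\<phi> \<in> Vd" and t: "t \<in> ftens 1"
  shows "pair (dual_snoc (dual_snoc \<Psi> cov) \<phi>) (YL Y k (Yx Y n t)) =
    (if k = n then pair (dual_snoc \<Psi> \<phi>) (Yx Y k t) else 0)"
proof -
  have "pair (dual_snoc (dual_snoc \<Psi> cov) \<phi>) (YL Y k (Yx Y n t)) =
      (\<Sum>\<psi>s\<in>fsupp \<Psi>. \<Psi> \<psi>s * (if k = n then pair_dec (\<psi>s @ [\<phi>]) (Yx Y k t) else 0))"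
    unfolding pair_dual_snoc_snoc
  proof (rule sum.cong[OF refl])
    fix \<psi>s assume "\<psi>s \<in> fsupp \<Psi>"
    then obtain \<psi> where "\<psi>s = [\<psi>]" "\<psi> \<in> Vd" by (rule dualten_1_cases[OF \<Psi>])
    then show "\<Psi> \<psi>s * pair_dec (\<psi>s @ [cov, \<phi>]) (YL Y k (Yx Y n t)) =
        \<Psi> \<psi>s * (if k = n then pair_dec (\<psi>s @ [\<phi>]) (Yx Y k t) else 0)"
      by (simp add: pair_dec_cov_middle[OF _ \<phi> t])
  qed
  then show ?thesis by (simp add: pair_dual_snoc)
qed

lemma colocality_skew_side:
  assumes \<phi>: "\<phi>1 \<in> Vd" "\<phi>2 \<in> Vd" "\<phi>3 \<in> Vd" and t: "t \<in> ftens 1"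
  shows "(\<Sum>ys\<in>fsupp (Yx Y (p + q) t). Yx Y (p + q) t ys *
      ((\<Sum>k\<in>{k. D k (ys ! 0) \<noteq> 0}. pair_dec [\<phi>1, \<phi>2] (Y (k - p) (D k (ys ! 0)))) * \<phi>3 (ys ! 1)))
    = pair_dec [\<phi>1, \<phi>2, \<phi>3] (YR Y p (Yx Y q t))"
proof -
  obtain \<Psi> where \<Psi>: "\<And>m. \<Psi> m \<in> dualten Vd 1" "\<And>m y. pair_dec [\<phi>1, \<phi>2] (Y m y) = pair (\<Psi> m) (pure [y])"
    by (rule pair_dec_Y_in_dual[OF \<phi>(1,2)]) blast
  have fin: "finite (fsupp t)" using t by (rule ftensD)
  define W where "W = Yx Y (p + q) t"
  have W: "W \<in> ftens 2" unfolding W_def using ftens_Yx[OF fin] .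
  define K where "K = (\<Union>ys\<in>fsupp W. {k. D k (ys ! 0) \<noteq> 0}) \<union> {p + q}"
  have K: "finite K" unfolding K_def using ftensD(1)[OF W] finite_D_support by auto
  define H where "H k y = pair (dual_snoc (\<Psi> (k - p)) cov) (Y k y)" for k y
  have \<Psi>_cov: "dual_snoc (\<Psi> m) cov \<in> dualten Vd 2" for m
    using dual_snoc_in_dualten[OF \<Psi>(1) cov_in_Vd] by (simp add: numeral_2_eq_2)
  have extend: "(\<Sum>k\<in>{k. D k (ys ! 0) \<noteq> 0}. pair_dec [\<phi>1, \<phi>2] (Y (k - p) (D k (ys ! 0)))) =
      (\<Sum>k\<in>K. H k (ys ! 0))" if "ys \<in> fsupp W" for ys
    unfolding \<Psi>(2) H_def using that by (intro sum_D_support_eq_sum_Y \<Psi>(1) K) (auto simp: K_def)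
  have "(\<Sum>ys\<in>fsupp W. W ys *
      ((\<Sum>k\<in>{k. D k (ys ! 0) \<noteq> 0}. pair_dec [\<phi>1, \<phi>2] (Y (k - p) (D k (ys ! 0)))) * \<phi>3 (ys ! 1))) =
      (\<Sum>ys\<in>fsupp W. \<Sum>k\<in>K. W ys * (H k (ys ! 0) * \<phi>3 (ys ! 1)))"
    by (intro sum.cong refl) (simp add: extend sum_distrib_left sum_distrib_right)
  also have "\<dots> = (\<Sum>k\<in>K. \<Sum>ys\<in>fsupp W. W ys * (H k (ys ! 0) * \<phi>3 (ys ! 1)))"
    by (rule sum.swap)
  also have "\<dots> = (\<Sum>k\<in>K. pair (dual_snoc (dual_snoc (\<Psi> (k - p)) cov) \<phi>3) (YL Y k W))"
    using pair_dual_snoc_YL[OF \<Psi>_cov W] by (simp add: H_def)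
  also have "\<dots> = (\<Sum>k\<in>K. if k = p + q then pair (dual_snoc (\<Psi> q) \<phi>3) W else 0)"
    by (intro sum.cong refl) (simp add: W_def pair_cov_middle[OF \<Psi>(1) \<phi>(3) t])
  also have "\<dots> = pair_dec [\<phi>1, \<phi>2, \<phi>3] (YL Y q W)"
    using K by (simp add: K_def pair_dual_snoc_1[OF \<Psi>(1) W] pair_dec_YL[OF W] \<Psi>(2))
  also have "\<dots> = pair_dec [\<phi>1, \<phi>2, \<phi>3] (YR Y p (Yx Y q t))"
    using weak_coassociativity_pair_dec[of "[\<phi>1, \<phi>2, \<phi>3]" t q "p + q"] \<phi> t by (simp add: W_def)
  finally show ?thesis unfolding W_def .
qed

lemma colocality_pair_dec:
  assumes \<phi>: "\<phi>1 \<in> Vd" "\<phi>2 \<in> Vd" "\<phi>3 \<in> Vd" and t: "t \<in> ftens 1"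
  shows "finite (fsupp (\<lambda>j. pair_dec [\<phi>1, \<phi>2, \<phi>3] (SL S j (YR Y (q - j) (Yx Y (p + j) t))))) \<and>
    (\<Sum>j\<in>fsupp (\<lambda>j. pair_dec [\<phi>1, \<phi>2, \<phi>3] (SL S j (YR Y (q - j) (Yx Y (p + j) t)))).
       pair_dec [\<phi>1, \<phi>2, \<phi>3] (SL S j (YR Y (q - j) (Yx Y (p + j) t))))
    = pair_dec [\<phi>1, \<phi>2, \<phi>3] (YR Y p (Yx Y q t))"
proof -
  let ?a = "\<lambda>j. pair_dec [\<phi>1, \<phi>2, \<phi>3] (SL S j (YR Y (q - j) (Yx Y (p + j) t)))"
  define W where "W = Yx Y (p + q) t"
  have W: "finite (fsupp W)" unfolding W_def using ftens_Yx[OF ftensD(1)[OF t]] by (rule ftensD)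
  define g where "g j y = pair_dec [\<phi>1, \<phi>2] (Sx S j (Y (p + j) y))" for j y
  have "set [\<phi>1, \<phi>2] \<subseteq> Vd" "length [\<phi>1, \<phi>2] = 2" using \<phi> by simp_all
  then obtain F where F: "\<And>y. finite (F y)" "\<And>y j. j \<notin> F y \<Longrightarrow> g j y = 0"
    "\<And>y. (\<Sum>j\<in>F y. g j y) = (\<Sum>k\<in>{k. D k y \<noteq> 0}. pair_dec [\<phi>1, \<phi>2] (Y (k - p) (D k y)))"
    unfolding g_def by (rule skew_symmetry_pair_dec[where p = p]) blast
  define J where "J = (\<Union>ys\<in>fsupp W. F (ys ! 0))"
  have J: "finite J" unfolding J_def using W F(1) by auto
  have a: "?a j = (\<Sum>ys\<in>fsupp W. W ys * (g j (ys ! 0) * \<phi>3 (ys ! 1)))" for j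
    unfolding W_def g_def by (rule colocality_term[OF \<phi> t])
  have "?a j = 0" if "j \<notin> J" for j
    unfolding a using that F(2) by (auto simp: J_def intro!: sum.neutral)
  then have sub: "fsupp ?a \<subseteq> J" by (auto simp: fsupp_def)
  have "(\<Sum>j\<in>fsupp ?a. ?a j) = (\<Sum>j\<in>J. \<Sum>ys\<in>fsupp W. W ys * (g j (ys ! 0) * \<phi>3 (ys ! 1)))"
    unfolding a[symmetric] by (rule sum.mono_neutral_left[OF J sub]) (auto simp: fsupp_def)
  also have "\<dots> = (\<Sum>ys\<in>fsupp W. W ys * ((\<Sum>j\<in>J. g j (ys ! 0)) * \<phi>3 (ys ! 1)))"
    by (subst sum.swap) (simp add: sum_distrib_left sum_distrib_right)
  also have "\<dots> = (\<Sum>ys\<in>fsupp W. W ys * ((\<Sum>j\<in>F (ys ! 0). g j (ys ! 0)) * \<phi>3 (ys ! 1)))"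
  proof (rule sum.cong[OF refl])
    fix ys assume "ys \<in> fsupp W"
    then have "(\<Sum>j\<in>J. g j (ys ! 0)) = (\<Sum>j\<in>F (ys ! 0). g j (ys ! 0))"
      using F(2) by (intro sum.mono_neutral_right[OF J]) (auto simp: J_def)
    then show "W ys * ((\<Sum>j\<in>J. g j (ys ! 0)) * \<phi>3 (ys ! 1)) =
        W ys * ((\<Sum>j\<in>F (ys ! 0). g j (ys ! 0)) * \<phi>3 (ys ! 1))"
      by simp
  qed
  also have "\<dots> = pair_dec [\<phi>1, \<phi>2, \<phi>3] (YR Y p (Yx Y q t))"
    unfolding F(3) W_def by (rule colocality_skew_side[OF \<phi> t])
  finally show ?thesis using finite_subset[OF sub J] by blast
qed

lemma pair_YR_eventually_zero:
  assumes \<Phi>: "\<Phi> \<in> dualten Vd 3"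
  shows "eventually (\<lambda>p. \<forall>T\<in>ftens 2. pair \<Phi> (YR Y p T) = 0) at_top"
proof -
  have "eventually (\<lambda>p. \<forall>\<phi>s\<in>fsupp \<Phi>. \<forall>y. pair_dec [\<phi>s ! 1, \<phi>s ! 2] (Y p y) = 0) at_top"
  proof (rule eventually_ball_finite[OF dualtenD(1)[OF \<Phi>]], rule ballI)
    fix \<phi>s assume "\<phi>s \<in> fsupp \<Phi>"
    then obtain \<phi>1 \<phi>2 \<phi>3 where "\<phi>s = [\<phi>1, \<phi>2, \<phi>3]" "\<phi>2 \<in> Vd" "\<phi>3 \<in> Vd" by (rule dualten_3_cases[OF \<Phi>])
    then show "eventually (\<lambda>p. \<forall>y. pair_dec [\<phi>s ! 1, \<phi>s ! 2] (Y p y) = 0) at_top"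
      using pair_dec_Y_eventually_zero by simp
  qed
  then show ?thesis
  proof (rule eventually_mono)
    fix p assume vanish: "\<forall>\<phi>s\<in>fsupp \<Phi>. \<forall>y. pair_dec [\<phi>s ! 1, \<phi>s ! 2] (Y p y) = 0"
    have "\<Phi> \<phi>s * pair_dec \<phi>s (YR Y p T) = 0" if \<phi>s: "\<phi>s \<in> fsupp \<Phi>" and T: "T \<in> ftens 2" for \<phi>s T
    proof -
      obtain \<phi>1 \<phi>2 \<phi>3 where "\<phi>s = [\<phi>1, \<phi>2, \<phi>3]" using dualten_3_cases[OF \<Phi> \<phi>s] by blast
      then show ?thesis using bspec[OF vanish \<phi>s] by (simp add: pair_dec_YR[OF T])
    qed
    then show "\<forall>T\<in>ftens 2. pair \<Phi> (YR Y p T) = 0"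
      by (simp add: pair_eq_sum_pair_dec)
  qed
qed

lemma in_dser_YR_Yx:
  assumes \<Phi>: "\<Phi> \<in> dualten Vd 3"
  shows "in_dser Vd 1 (\<lambda>t (p, q). pair \<Phi> (YR Y p (Yx Y q t)))"
proof -
  let ?cA = "\<lambda>t (m, k). single (YL Y m (Yx Y k t))"
  have coassoc: "in_dser Vd 1 (pcoeff \<Phi> ?cA)"
    "\<forall>t\<in>ftens 1. \<forall>mk. pcoeff \<Phi> ?cA t mk = pcoeff \<Phi> (\<lambda>t (m, k). single (YR Y (k - m) (Yx Y m t))) t mk"
    using weak_coassociativity \<Phi> unfolding op_equiv_def by blast+
  have reindex: "pair \<Phi> (YR Y p (Yx Y q t)) = pcoeff \<Phi> ?cA t (q, p + q)" if "t \<in> ftens 1" for t p q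
    using coassoc(2) that by simp
  obtain M K where MK: "\<forall>t\<in>ftens 1. \<forall>m n. (m > M \<or> n > K) \<longrightarrow> pcoeff \<Phi> ?cA t (m, n) = 0"
    using coassoc(1) unfolding in_dser_def by blast
  txt \<open>Weak coassociativity bounds \<open>q\<close> and \<open>p + q\<close> only; the bound on \<open>p\<close> comes from
    \<open>pair_YR_eventually_zero\<close>.\<close>
  obtain P where P: "\<And>p T. p \<ge> P \<Longrightarrow> T \<in> ftens 2 \<Longrightarrow> pair \<Phi> (YR Y p T) = 0"
    using pair_YR_eventually_zero[OF \<Phi>] unfolding eventually_at_top_linorder by blast
  have "\<exists>\<Psi>\<in>dualten Vd 1. \<forall>t\<in>ftens 1. pair \<Phi> (YR Y p (Yx Y q t)) = pair \<Psi> t" for p q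
  proof -
    obtain \<Psi> where "\<Psi> \<in> dualten Vd 1" "\<forall>t\<in>ftens 1. pcoeff \<Phi> ?cA t (q, p + q) = pair \<Psi> t"
      using coassoc(1) unfolding in_dser_def by blast
    then show ?thesis using reindex by auto
  qed
  then have "\<forall>mk. \<exists>\<Psi>\<in>dualten Vd 1. \<forall>t\<in>ftens 1. (\<lambda>t (p, q). pair \<Phi> (YR Y p (Yx Y q t))) t mk = pair \<Psi> t"
    by (simp add: split_paired_all)
  moreover have "pair \<Phi> (YR Y p (Yx Y q t)) = 0" if t: "t \<in> ftens 1" and "p > P \<or> q > M" for t p q
  proof (cases "q > M")
    case True
    then show ?thesis using MK t reindex[OF t] by simp
  next
    case False
    then have "p \<ge> P" using that(2) by simp
    then show ?thesis using P ftens_Yx[OF ftensD(1)[OF t]] by blast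
  qed
  then have "\<forall>t\<in>ftens 1. \<forall>p q. (p > P \<or> q > M) \<longrightarrow> (\<lambda>t (p, q). pair \<Phi> (YR Y p (Yx Y q t))) t (p, q) = 0"
    by simp
  ultimately show ?thesis unfolding in_dser_def by blast
qed

lemma colocality_equiv:
  "op_equiv Vd 1 3 (\<lambda>t (p, q) j. SL S j (YR Y (q - j) (Yx Y (p + j) t))) (\<lambda>t (p, q). single (YR Y p (Yx Y q t)))"
  unfolding op_equiv_def
proof (intro ballI conjI allI)
  fix \<Phi> assume \<Phi>: "\<Phi> \<in> dualten Vd 3"
  let ?A = "\<lambda>t (p, q) j. SL S j (YR Y (q - j) (Yx Y (p + j) t))"
  let ?B = "\<lambda>t (p, q). single (YR Y p (Yx Y q t))"
  have A: "finite (fsupp (\<lambda>j. pair \<Phi> (SL S j (YR Y (q - j) (Yx Y (p + j) t))))) \<and>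
      pcoeff \<Phi> ?A t (p, q) = pair \<Phi> (YR Y p (Yx Y q t))" if t: "t \<in> ftens 1" for t p q
  proof -
    have "finite (fsupp (\<lambda>j. pair \<Phi> (SL S j (YR Y (q - j) (Yx Y (p + j) t))))) \<and>
      (\<Sum>j\<in>fsupp (\<lambda>j. pair \<Phi> (SL S j (YR Y (q - j) (Yx Y (p + j) t)))). pair \<Phi> (SL S j (YR Y (q - j) (Yx Y (p + j) t))))
        = pair \<Phi> (YR Y p (Yx Y q t))"
    proof (rule pair_family_sum_by_components[OF dualtenD(1)[OF \<Phi>]])
      fix \<phi>s assume "\<phi>s \<in> fsupp \<Phi>"
      then obtain \<phi>1 \<phi>2 \<phi>3 where "\<phi>s = [\<phi>1, \<phi>2, \<phi>3]" "\<phi>1 \<in> Vd" "\<phi>2 \<in> Vd" "\<phi>3 \<in> Vd"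
        by (rule dualten_3_cases[OF \<Phi>])
      then show "finite (fsupp (\<lambda>j. pair_dec \<phi>s (SL S j (YR Y (q - j) (Yx Y (p + j) t))))) \<and>
          (\<Sum>j\<in>fsupp (\<lambda>j. pair_dec \<phi>s (SL S j (YR Y (q - j) (Yx Y (p + j) t)))).
            pair_dec \<phi>s (SL S j (YR Y (q - j) (Yx Y (p + j) t)))) = pair_dec \<phi>s (YR Y p (Yx Y q t))"
        using colocality_pair_dec[OF _ _ _ t] by simp
    qed
    then show ?thesis by (simp add: pcoeff_def)
  qed
  have B: "pcoeff \<Phi> ?B = (\<lambda>t (p, q). pair \<Phi> (YR Y p (Yx Y q t)))"
    by (intro ext) (simp split: prod.split)
  show "in_dser Vd 1 (pcoeff \<Phi> ?B)"
    unfolding B by (rule in_dser_YR_Yx[OF \<Phi>])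
  show "in_dser Vd 1 (pcoeff \<Phi> ?A)"
    using in_dser_YR_Yx[OF \<Phi>] A in_dser_cong[of 1 "pcoeff \<Phi> ?A" "\<lambda>t (p, q). pair \<Phi> (YR Y p (Yx Y q t))" Vd]
    by (auto simp: split_paired_all)
  fix t :: "('r,'v) ten" and mk :: "int \<times> int" assume t: "t \<in> ftens 1"
  obtain p q where mk: "mk = (p, q)" by fastforce
  show "finite (fsupp (\<lambda>j. pair \<Phi> (?A t mk j)))" "finite (fsupp (\<lambda>j. pair \<Phi> (?B t mk j)))"
    "pcoeff \<Phi> ?A t mk = pcoeff \<Phi> ?B t mk"
    using A[OF t] by (simp_all add: mk)
qed

end

theorem lemma3p1p5:
  fixes sc :: "'r::comm_ring_1 \<Rightarrow> 'v::ab_group_add \<Rightarrow> 'v"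
    and Vd :: "('v \<Rightarrow> 'r) set" and cov :: "'v \<Rightarrow> 'r"
    and D :: "int \<Rightarrow> 'v \<Rightarrow> 'v" and Y :: "int \<Rightarrow> 'v \<Rightarrow> ('r,'v) ten"
    and S :: "int \<Rightarrow> 'v \<Rightarrow> 'v \<Rightarrow> ('r,'v) ten"
  assumes "bmv_coalgebra sc Vd cov D Y S"
  shows
    \<comment> \<open>(1) translation: Y(z) D(w) == (id (x) D(w)) Y(zw)\<close>
    "op_equiv Vd 1 2
       (\<lambda>t (m, k). single (Yx Y m (Dx D k t)))
       (\<lambda>t (m, k). single (DR D (k - m) (Yx Y m t)))
     \<and>
     \<comment> \<open>(2) colocality: (S(w/z) (x) id)(id (x) Y(w)) Y(z) == (id (x) Y(z)) Y(w)\<close>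
     op_equiv Vd 1 3
       (\<lambda>t (p, q) j. SL S j (YR Y (q - j) (Yx Y (p + j) t)))
       (\<lambda>t (p, q). single (YR Y p (Yx Y q t)))"
proof -
  interpret braided_mv_coalgebra sc Vd cov D Y S
    using assms by unfold_locales
  show ?thesis using translation_equiv colocality_equiv by blast
qed

end
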